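(* Let $\lambda$ be a partition with at most $n$ parts. Let $s+1$ be the number of distinct values in $\lambda$ after padding with zeros to length $n$ (equivalently, $s$ is the largest part of the reduction $\nu$ of $\lambda$). Then the moment variety $\mathcal{M}_{n,\lambda}=\mathcal{M}_{n,\nu}$ has dimension $(n-1)s$.
   Context: Work over $\mathbb{C}$. For a partition $\lambda$ of $d$ with at most $n$ parts, $N_\lambda$ is the set of index vectors $(i_1,\ldots,i_n)\in\mathbb{Z}_{\ge0}^n$ whose multiset of nonzero entries equals $\lambda$. The variety $\mathcal{M}_{n,\lambda}\subset\mathbb{P}^{|N_\lambda|-1}$ is the Zariski closure of the image of $(\mu_{ki})\mapsto(\mu_{1i_1}\cdots\mu_{ni_n})_{(i_1,\ldots,i_n)\in N_\lambda}$, with $\mu_{k0}=1$. Reduction: if the distinct values of the zero-padded $\lambda$ have multiplicities $k_0\ge\cdots\ge k_s$, the reduction is $\nu=(s^{k_s},(s-1)^{k_{s-1}},\ldots,1^{k_1},0^{k_0})$. The variety $\mathcal{M}_{n,\nu}$ is defined in the same way, and it is identified with $\mathcal{M}_{n,\lambda}$ by relabeling the index values. *)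

theory Defs
  imports Complex_Main "HOL-Library.Poly_Mapping" "HOL-Library.Multiset"
begin

definition index_set :: "nat \<Rightarrow> nat list \<Rightarrow> nat list set" where
  "index_set n lam = {is. length is = n \<and> mset (filter (\<lambda>i. i \<noteq> 0) is) = mset lam}"

definition is_partition :: "nat list \<Rightarrow> bool" where
  "is_partition lam \<longleftrightarrow> sorted_wrt (\<ge>) lam \<and> (\<forall>x\<in>set lam. 0 < x)"

type_synonym 'v cpoly = "('v \<Rightarrow>\<^sub>0 nat) \<Rightarrow>\<^sub>0 complex"

definition mono_deg :: "('v \<Rightarrow>\<^sub>0 nat) \<Rightarrow> nat" where
  "mono_deg m = (\<Sum>v\<in>Poly_Mapping.keys m. Poly_Mapping.lookup m v)"

definition cpoly_eval :: "'v cpoly \<Rightarrow> ('v \<Rightarrow> complex) \<Rightarrow> complex" where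
  "cpoly_eval p x = (\<Sum>m\<in>Poly_Mapping.keys p. Poly_Mapping.lookup p m * (\<Prod>v\<in>Poly_Mapping.keys m. x v ^ Poly_Mapping.lookup m v))"

definition homogeneous :: "'v cpoly \<Rightarrow> bool" where
  "homogeneous p \<longleftrightarrow> (\<exists>d. \<forall>m\<in>Poly_Mapping.keys p. mono_deg m = d)"

text \<open>Projective space P(C^N), N a set of coordinates, realised as the nonzero vectors
  supported on N (closed sets are cones, so chains of closed irreducible subsets
  correspond exactly to those of the quotient by scaling).\<close>

definition proj_points :: "'v set \<Rightarrow> ('v \<Rightarrow> complex) set" where
  "proj_points N = {x. (\<forall>v. v \<notin> N \<longrightarrow> x v = 0) \<and> (\<exists>v. x v \<noteq> 0)}"

definition proj_closed :: "'v set \<Rightarrow> ('v \<Rightarrow> complex) set \<Rightarrow> bool" where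
  "proj_closed N S \<longleftrightarrow> (\<exists>F. (\<forall>f\<in>F. homogeneous f) \<and>
      S = {x \<in> proj_points N. \<forall>f\<in>F. cpoly_eval f x = 0})"

definition zariski_closure :: "'v set \<Rightarrow> ('v \<Rightarrow> complex) set \<Rightarrow> ('v \<Rightarrow> complex) set" where
  "zariski_closure N A = \<Inter>{S. proj_closed N S \<and> A \<subseteq> S}"

definition proj_irreducible :: "'v set \<Rightarrow> ('v \<Rightarrow> complex) set \<Rightarrow> bool" where
  "proj_irreducible N Z \<longleftrightarrow> proj_closed N Z \<and> Z \<noteq> {} \<and>
     (\<forall>A B. proj_closed N A \<longrightarrow> proj_closed N B \<longrightarrow> Z = A \<union> B \<longrightarrow> Z = A \<or> Z = B)"

definition has_irred_chain :: "'v set \<Rightarrow> ('v \<Rightarrow> complex) set \<Rightarrow> nat \<Rightarrow> bool" where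
  "has_irred_chain N X k \<longleftrightarrow> (\<exists>Z :: nat \<Rightarrow> ('v \<Rightarrow> complex) set.
      (\<forall>i\<le>k. proj_irreducible N (Z i) \<and> Z i \<subseteq> X) \<and> (\<forall>i<k. Z i \<subset> Z (Suc i)))"

definition proj_dim_eq :: "'v set \<Rightarrow> ('v \<Rightarrow> complex) set \<Rightarrow> nat \<Rightarrow> bool" where
  "proj_dim_eq N X d \<longleftrightarrow> has_irred_chain N X d \<and> \<not> has_irred_chain N X (Suc d)"

definition moment_point :: "nat \<Rightarrow> nat list \<Rightarrow> (nat \<Rightarrow> nat \<Rightarrow> complex) \<Rightarrow> nat list \<Rightarrow> complex" where
  "moment_point n lam mu is = (if is \<in> index_set n lam
      then (\<Prod>k<n. if is ! k = 0 then 1 else mu k (is ! k)) else 0)"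

definition moment_variety :: "nat \<Rightarrow> nat list \<Rightarrow> (nat list \<Rightarrow> complex) set" where
  "moment_variety n lam = zariski_closure (index_set n lam)
      ({moment_point n lam mu | mu. True} \<inter> proj_points (index_set n lam))"

end

theory Submission
  imports Defs "HOL-Library.Function_Algebras" "HOL-Computational_Algebra.Polynomial"
begin

text \<open>
  A coordinate of the moment map depends on the parameters \<open>\<mu>\<^sub>k\<^sub>w\<close> only through which value \<open>w\<close>
  sits at which position \<open>k\<close>; fix one of the \<open>s + 1\<close> values of the padded partition, \<open>wb\<close>
  (the value \<open>0\<close> if it occurs).

  Lower bound: freeing the \<open>(n - 1) s\<close> parameters \<open>\<mu>\<^sub>k\<^sub>w\<close> with \<open>k \<ge> 1\<close> and \<open>w \<noteq> wb\<close> one at a time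
  gives a chain of closures of images of affine spaces, which are irreducible. Each inclusion is
  strict: before \<open>\<mu>\<^sub>k\<^sub>0\<^sub>w\<^sub>0\<close> is freed, the two coordinates that differ by swapping \<open>w\<^sub>0\<close> and \<open>wb\<close>
  between positions \<open>0\<close> and \<open>k\<^sub>0\<close> coincide.

  Upper bound: a chain of irreducible closed sets of length \<open>k\<close> yields \<open>k + 1\<close> coordinates that
  are algebraically independent on the variety, since the number of independent coordinates
  grows along every strict inclusion (a transcendence degree argument with polynomial functions
  on irreducible cones). But any \<open>(n - 1) s + 2\<close> coordinates admit a nonzero integer relation
  that balances, for every position and value, how often they use that value there; such a
  relation is a binomial equation vanishing on the variety.
\<close>

section \<open>Polynomial functions\<close>

definition monomial_eval :: "('v \<Rightarrow>\<^sub>0 nat) \<Rightarrow> ('v \<Rightarrow> complex) \<Rightarrow> complex" where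
  "monomial_eval m x = (\<Prod>v\<in>Poly_Mapping.keys m. x v ^ Poly_Mapping.lookup m v)"

lemma monomial_eval_superset:
  assumes "finite V" "Poly_Mapping.keys m \<subseteq> V"
  shows "monomial_eval m x = (\<Prod>v\<in>V. x v ^ Poly_Mapping.lookup m v)"
  unfolding monomial_eval_def
  by (rule prod.mono_neutral_left) (use assms in \<open>auto simp: in_keys_iff\<close>)

lemma monomial_eval_add: "monomial_eval (m + m') x = monomial_eval m x * monomial_eval m' x"
proof -
  let ?V = "Poly_Mapping.keys m \<union> Poly_Mapping.keys m'"
  have "monomial_eval (m + m') x = (\<Prod>v\<in>?V. x v ^ Poly_Mapping.lookup (m + m') v)"
    by (rule monomial_eval_superset) (auto dest: subsetD[OF keys_add])
  also have "\<dots> = (\<Prod>v\<in>?V. x v ^ Poly_Mapping.lookup m v * x v ^ Poly_Mapping.lookup m' v)"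
    by (simp add: lookup_add power_add)
  also have "\<dots> = monomial_eval m x * monomial_eval m' x"
    by (simp add: prod.distrib monomial_eval_superset[of ?V m] monomial_eval_superset[of ?V m'])
  finally show ?thesis .
qed

lemma monomial_eval_0 [simp]: "monomial_eval 0 x = 1"
  by (simp add: monomial_eval_def)

lemma monomial_eval_single [simp]: "monomial_eval (Poly_Mapping.single v k) x = x v ^ k"
  by (simp add: monomial_eval_def)

lemma monomial_eval_scale: "monomial_eval m (\<lambda>v. t * x v) = t ^ mono_deg m * monomial_eval m x"
  by (simp add: monomial_eval_def mono_deg_def power_mult_distrib prod.distrib power_sum)

lemma monomial_eval_update_0:
  "monomial_eval m x = monomial_eval (Poly_Mapping.update j 0 m) x * x j ^ Poly_Mapping.lookup m j"
proof -
  let ?V = "insert j (Poly_Mapping.keys m)"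
  have "monomial_eval m x = (\<Prod>v\<in>?V. x v ^ Poly_Mapping.lookup m v)"
    by (rule monomial_eval_superset) auto
  also have "\<dots> = x j ^ Poly_Mapping.lookup m j * (\<Prod>v\<in>?V - {j}. x v ^ Poly_Mapping.lookup m v)"
    by (rule prod.remove) auto
  also have "(\<Prod>v\<in>?V - {j}. x v ^ Poly_Mapping.lookup m v)
      = (\<Prod>v\<in>?V. x v ^ Poly_Mapping.lookup (Poly_Mapping.update j 0 m) v)"
    by (auto simp: prod.insert_remove lookup_update intro!: prod.cong split: if_splits)
  also have "\<dots> = monomial_eval (Poly_Mapping.update j 0 m) x"
    by (rule monomial_eval_superset[symmetric]) (auto simp: keys_update)
  finally show ?thesis by (simp add: mult.commute)
qed

lemma cpoly_eval_monomial_eval: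
  "cpoly_eval p x = (\<Sum>m\<in>Poly_Mapping.keys p. Poly_Mapping.lookup p m * monomial_eval m x)"
  by (simp add: cpoly_eval_def monomial_eval_def)

lemma cpoly_eval_superset:
  assumes "finite M" "Poly_Mapping.keys p \<subseteq> M"
  shows "cpoly_eval p x = (\<Sum>m\<in>M. Poly_Mapping.lookup p m * monomial_eval m x)"
  unfolding cpoly_eval_monomial_eval
  by (rule sum.mono_neutral_left) (use assms in \<open>auto simp: in_keys_iff\<close>)

lemma cpoly_eval_add: "cpoly_eval (p + q) x = cpoly_eval p x + cpoly_eval q x"
proof -
  let ?M = "Poly_Mapping.keys p \<union> Poly_Mapping.keys q"
  have "cpoly_eval (p + q) x = (\<Sum>m\<in>?M. Poly_Mapping.lookup (p + q) m * monomial_eval m x)"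
    by (rule cpoly_eval_superset) (auto dest: subsetD[OF keys_add])
  also have "\<dots> = cpoly_eval p x + cpoly_eval q x"
    by (simp add: lookup_add distrib_right sum.distrib cpoly_eval_superset[of ?M p]
        cpoly_eval_superset[of ?M q])
  finally show ?thesis .
qed

lemma cpoly_eval_single [simp]: "cpoly_eval (Poly_Mapping.single m c) x = c * monomial_eval m x"
  by (simp add: cpoly_eval_monomial_eval)

lemma cpoly_eval_0 [simp]: "cpoly_eval 0 x = 0"
  by (simp add: cpoly_eval_monomial_eval)

lemma cpoly_eval_scale:
  assumes "\<forall>m\<in>Poly_Mapping.keys p. mono_deg m = d"
  shows "cpoly_eval p (\<lambda>v. t * x v) = t ^ d * cpoly_eval p x"
  using assms by (simp add: cpoly_eval_monomial_eval monomial_eval_scale sum_distrib_left mult_ac)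

text \<open>Polynomials as lists of (coefficient, monomial) pairs, repetitions allowed: unlike
  \<^typ>\<open>'v cpoly\<close> they admit list induction and an obvious product.\<close>

type_synonym 'v poly_list = "(complex \<times> ('v \<Rightarrow>\<^sub>0 nat)) list"

definition poly_list_eval :: "'v poly_list \<Rightarrow> ('v \<Rightarrow> complex) \<Rightarrow> complex" where
  "poly_list_eval L x = (\<Sum>(c, m)\<leftarrow>L. c * monomial_eval m x)"

definition poly_list_vars :: "'v poly_list \<Rightarrow> 'v set" where
  "poly_list_vars L = (\<Union>p\<in>set L. Poly_Mapping.keys (snd p))"

definition poly_list_mult :: "'v poly_list \<Rightarrow> 'v poly_list \<Rightarrow> 'v poly_list" where
  "poly_list_mult L1 L2 = concat (map (\<lambda>(c, m). map (\<lambda>(c', m'). (c * c', m + m')) L2) L1)"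

definition cpoly_of_list :: "'v poly_list \<Rightarrow> 'v cpoly" where
  "cpoly_of_list L = (\<Sum>(c, m)\<leftarrow>L. Poly_Mapping.single m c)"

lemma poly_list_eval_Nil [simp]: "poly_list_eval [] x = 0"
  by (simp add: poly_list_eval_def)

lemma poly_list_eval_Cons [simp]:
  "poly_list_eval ((c, m) # L) x = c * monomial_eval m x + poly_list_eval L x"
  by (simp add: poly_list_eval_def)

lemma poly_list_eval_append [simp]:
  "poly_list_eval (L1 @ L2) x = poly_list_eval L1 x + poly_list_eval L2 x"
  by (simp add: poly_list_eval_def)

lemma poly_list_vars_Nil [simp]: "poly_list_vars [] = {}"
  by (simp add: poly_list_vars_def)

lemma poly_list_vars_Cons [simp]:
  "poly_list_vars ((c, m) # L) = Poly_Mapping.keys m \<union> poly_list_vars L"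
  by (simp add: poly_list_vars_def)

lemma poly_list_vars_append [simp]:
  "poly_list_vars (L1 @ L2) = poly_list_vars L1 \<union> poly_list_vars L2"
  by (simp add: poly_list_vars_def)

lemma poly_list_eval_mult:
  "poly_list_eval (poly_list_mult L1 L2) x = poly_list_eval L1 x * poly_list_eval L2 x"
proof (induction L1)
  case Nil
  then show ?case by (simp add: poly_list_mult_def)
next
  case (Cons a L1)
  have scale: "poly_list_eval (map (\<lambda>(c', m'). (c * c', m + m')) L) x
      = c * monomial_eval m x * poly_list_eval L x" for c m and L :: "'a poly_list"
    by (induction L) (auto simp: monomial_eval_add distrib_left mult_ac)
  show ?case
    using Cons by (cases a) (simp add: poly_list_mult_def scale distrib_right)
qed

lemma poly_list_vars_mult:
  "poly_list_vars (poly_list_mult L1 L2) \<subseteq> poly_list_vars L1 \<union> poly_list_vars L2"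
proof (induction L1)
  case Nil
  then show ?case by (simp add: poly_list_mult_def)
next
  case (Cons a L1)
  have shift: "poly_list_vars (map (\<lambda>(c', m'). (c * c', m + m')) L)
      \<subseteq> Poly_Mapping.keys m \<union> poly_list_vars L" for c m and L :: "'a poly_list"
    by (induction L) (use keys_add in fastforce)+
  show ?case
    using Cons shift by (cases a) (fastforce simp: poly_list_mult_def)
qed

lemma cpoly_eval_cpoly_of_list: "cpoly_eval (cpoly_of_list L) x = poly_list_eval L x"
  by (induction L) (auto simp: cpoly_of_list_def cpoly_eval_add)

lemma keys_cpoly_of_list: "Poly_Mapping.keys (cpoly_of_list L) \<subseteq> snd ` set L"
proof (induction L)
  case Nil
  then show ?case by (simp add: cpoly_of_list_def)
next
  case (Cons a L)
  then show ?case
    using keys_add[of "Poly_Mapping.single (snd a) (fst a)"]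
    by (cases a) (fastforce simp: cpoly_of_list_def split: if_splits)
qed

lemma homogeneous_cpoly_of_list:
  assumes "\<forall>(c, m)\<in>set L. mono_deg m = d"
  shows "homogeneous (cpoly_of_list L)"
  unfolding homogeneous_def using assms keys_cpoly_of_list[of L] by (intro exI[of _ d]) force

definition poly_funs :: "'v set \<Rightarrow> (('v \<Rightarrow> complex) \<Rightarrow> complex) set" where
  "poly_funs S = {poly_list_eval L | L. poly_list_vars L \<subseteq> S}"

lemma poly_funsI: "poly_list_vars L \<subseteq> S \<Longrightarrow> f = poly_list_eval L \<Longrightarrow> f \<in> poly_funs S"
  unfolding poly_funs_def by blast

lemma poly_funsE:
  assumes "f \<in> poly_funs S"
  obtains L where "poly_list_vars L \<subseteq> S" "f = poly_list_eval L"
  using assms unfolding poly_funs_def by blast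

lemma poly_funs_const: "(\<lambda>x. c) \<in> poly_funs S"
  by (rule poly_funsI[of "[(c, 0)]"]) (auto simp: fun_eq_iff)

lemma poly_funs_var: "v \<in> S \<Longrightarrow> (\<lambda>x. x v) \<in> poly_funs S"
  by (rule poly_funsI[of "[(1, Poly_Mapping.single v 1)]"]) (auto simp: fun_eq_iff)

lemma poly_funs_add:
  assumes "f \<in> poly_funs S" "g \<in> poly_funs S"
  shows "(\<lambda>x. f x + g x) \<in> poly_funs S"
proof -
  obtain L1 L2 where "poly_list_vars L1 \<subseteq> S" "f = poly_list_eval L1"
    "poly_list_vars L2 \<subseteq> S" "g = poly_list_eval L2"
    using assms by (metis poly_funsE)
  then show ?thesis by (intro poly_funsI[of "L1 @ L2"]) (auto simp: fun_eq_iff)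
qed

lemma poly_funs_mult:
  assumes "f \<in> poly_funs S" "g \<in> poly_funs S"
  shows "(\<lambda>x. f x * g x) \<in> poly_funs S"
proof -
  obtain L1 L2 where "poly_list_vars L1 \<subseteq> S" "f = poly_list_eval L1"
    "poly_list_vars L2 \<subseteq> S" "g = poly_list_eval L2"
    using assms by (metis poly_funsE)
  then show ?thesis
    using poly_list_vars_mult[of L1 L2]
    by (intro poly_funsI[of "poly_list_mult L1 L2"]) (auto simp: fun_eq_iff poly_list_eval_mult)
qed

lemma poly_funs_uminus: "f \<in> poly_funs S \<Longrightarrow> (\<lambda>x. - f x) \<in> poly_funs S"
  using poly_funs_mult[OF poly_funs_const[of "-1"]] by simp

lemma poly_funs_diff: "f \<in> poly_funs S \<Longrightarrow> g \<in> poly_funs S \<Longrightarrow> (\<lambda>x. f x - g x) \<in> poly_funs S"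
  using poly_funs_add[OF _ poly_funs_uminus, of f S g] by simp

lemma poly_funs_sum:
  "finite I \<Longrightarrow> (\<And>i. i \<in> I \<Longrightarrow> f i \<in> poly_funs S) \<Longrightarrow> (\<lambda>x. \<Sum>i\<in>I. f i x) \<in> poly_funs S"
  by (induction I rule: finite_induct) (auto intro: poly_funs_add poly_funs_const[of 0, simplified])

lemma poly_funs_prod:
  "finite I \<Longrightarrow> (\<And>i. i \<in> I \<Longrightarrow> f i \<in> poly_funs S) \<Longrightarrow> (\<lambda>x. \<Prod>i\<in>I. f i x) \<in> poly_funs S"
  by (induction I rule: finite_induct) (auto intro: poly_funs_mult poly_funs_const[of 1, simplified])

lemma poly_funs_power: "f \<in> poly_funs S \<Longrightarrow> (\<lambda>x. f x ^ k) \<in> poly_funs S"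
  by (induction k) (auto intro: poly_funs_mult poly_funs_const[of 1, simplified])

lemma poly_funs_mono: "S \<subseteq> T \<Longrightarrow> poly_funs S \<subseteq> poly_funs T"
  by (auto elim!: poly_funsE intro: poly_funsI)

lemma cpoly_eval_in_poly_funs: "cpoly_eval p \<in> poly_funs UNIV"
proof -
  obtain ms where ms: "set ms = Poly_Mapping.keys p" "distinct ms"
    using finite_distinct_list[OF finite_keys[of p]] by blast
  have "cpoly_eval p x = poly_list_eval (map (\<lambda>m. (Poly_Mapping.lookup p m, m)) ms) x" for x
    by (simp add: poly_list_eval_def o_def cpoly_eval_monomial_eval sum_list_distinct_conv_sum_set ms)
  then show ?thesis by (intro poly_funsI) auto
qed

lemma proj_closed_subset: "proj_closed N S \<Longrightarrow> S \<subseteq> proj_points N"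
  unfolding proj_closed_def by auto

lemma proj_closed_proj_points: "proj_closed N (proj_points N)"
  unfolding proj_closed_def by (rule exI[of _ "{}"]) auto

lemma proj_closed_zero_set:
  assumes "proj_closed N Z" "homogeneous f"
  shows "proj_closed N {x\<in>Z. cpoly_eval f x = 0}"
proof -
  obtain F where "\<forall>f\<in>F. homogeneous f" "Z = {x \<in> proj_points N. \<forall>f\<in>F. cpoly_eval f x = 0}"
    using assms(1) unfolding proj_closed_def by blast
  then show ?thesis
    unfolding proj_closed_def using assms(2) by (intro exI[of _ "insert f F"]) auto
qed

lemma proj_closed_zero_set_list:
  assumes "proj_closed N Z" "\<forall>(c, m)\<in>set L. mono_deg m = d"
  shows "proj_closed N {x\<in>Z. poly_list_eval L x = 0}"
  using proj_closed_zero_set[OF assms(1) homogeneous_cpoly_of_list[OF assms(2)]]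
  by (simp add: cpoly_eval_cpoly_of_list)

lemma proj_closed_Inter:
  assumes "\<SS> \<noteq> {}" "\<forall>S\<in>\<SS>. proj_closed N S"
  shows "proj_closed N (\<Inter>\<SS>)"
proof -
  have "\<forall>S\<in>\<SS>. \<exists>F. (\<forall>f\<in>F. homogeneous f) \<and> S = {x \<in> proj_points N. \<forall>f\<in>F. cpoly_eval f x = 0}"
    using assms(2) unfolding proj_closed_def by blast
  then obtain FF where "\<forall>S\<in>\<SS>. (\<forall>f\<in>FF S. homogeneous f) \<and>
      S = {x \<in> proj_points N. \<forall>f\<in>FF S. cpoly_eval f x = 0}"
    by (auto dest: bchoice)
  then have FF: "\<And>S. S \<in> \<SS> \<Longrightarrow> (\<forall>f\<in>FF S. homogeneous f) \<and>
      S = {x \<in> proj_points N. \<forall>f\<in>FF S. cpoly_eval f x = 0}"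
    by blast
  have "\<Inter>\<SS> = {x \<in> proj_points N. \<forall>f\<in>(\<Union>S\<in>\<SS>. FF S). cpoly_eval f x = 0}"
  proof (intro equalityI subsetI)
    fix x assume x: "x \<in> \<Inter>\<SS>"
    obtain S0 where "S0 \<in> \<SS>"
      using assms(1) by blast
    then have "x \<in> proj_points N"
      using x FF[of S0] by auto
    moreover have "cpoly_eval f x = 0" if "S \<in> \<SS>" "f \<in> FF S" for S f
    proof -
      have "x \<in> S"
        using x that(1) by blast
      then show ?thesis
        using FF[OF that(1)] that(2) by blast
    qed
    ultimately show "x \<in> {x \<in> proj_points N. \<forall>f\<in>(\<Union>S\<in>\<SS>. FF S). cpoly_eval f x = 0}"
      by blast
  next
    fix x assume x: "x \<in> {x \<in> proj_points N. \<forall>f\<in>(\<Union>S\<in>\<SS>. FF S). cpoly_eval f x = 0}"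
    show "x \<in> \<Inter>\<SS>"
    proof
      fix S assume S: "S \<in> \<SS>"
      show "x \<in> S"
        using x FF[OF S] S by blast
    qed
  qed
  moreover have "\<forall>f\<in>(\<Union>S\<in>\<SS>. FF S). homogeneous f"
    using FF by blast
  ultimately show ?thesis
    unfolding proj_closed_def by blast
qed

lemma proj_closed_scale:
  assumes "proj_closed N Z" "x \<in> Z" "t \<noteq> 0"
  shows "(\<lambda>v. t * x v) \<in> Z"
proof -
  obtain F where F: "\<forall>f\<in>F. homogeneous f" "Z = {x \<in> proj_points N. \<forall>f\<in>F. cpoly_eval f x = 0}"
    using assms(1) unfolding proj_closed_def by blast
  have x: "x \<in> proj_points N" "\<forall>f\<in>F. cpoly_eval f x = 0"
    using assms(2) unfolding F(2) by auto
  have "cpoly_eval f (\<lambda>v. t * x v) = 0" if f: "f \<in> F" for f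
  proof -
    obtain d where "\<forall>m\<in>Poly_Mapping.keys f. mono_deg m = d"
      using F(1) f unfolding homogeneous_def by blast
    then have "cpoly_eval f (\<lambda>v. t * x v) = t ^ d * cpoly_eval f x"
      by (rule cpoly_eval_scale)
    then show ?thesis
      using x(2) f by simp
  qed
  moreover have "(\<lambda>v. t * x v) \<in> proj_points N"
  proof -
    obtain v where "x v \<noteq> 0"
      using x(1) unfolding proj_points_def by blast
    then have "t * x v \<noteq> 0"
      using assms(3) by simp
    then show ?thesis
      using x(1) unfolding proj_points_def by auto
  qed
  ultimately show ?thesis
    unfolding F(2) by blast
qed

lemma homogeneous_constant_if_nonzero_at_0:
  assumes "homogeneous f" "cpoly_eval f (\<lambda>v. 0) \<noteq> 0"
  shows "cpoly_eval f x = cpoly_eval f (\<lambda>v. 0)"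
proof -
  obtain d where "\<forall>m\<in>Poly_Mapping.keys f. mono_deg m = d"
    using assms(1) unfolding homogeneous_def by blast
  then have scale: "cpoly_eval f (\<lambda>v. 0 * y v) = 0 ^ d * cpoly_eval f y" for y
    by (rule cpoly_eval_scale)
  then have "d = 0"
    using assms(2) scale[of "\<lambda>v. 0"] by (cases d) auto
  then show ?thesis
    using scale[of x] by simp
qed

lemma proj_closed_separating_equation:
  assumes A: "proj_closed N A" "A \<noteq> {}" and y: "y \<in> proj_points N" "y \<notin> A"
  obtains f where "\<forall>x\<in>A. cpoly_eval f x = 0" "cpoly_eval f y \<noteq> 0" "cpoly_eval f (\<lambda>v. 0) = 0"
proof -
  obtain F where F: "\<forall>f\<in>F. homogeneous f" "A = {x \<in> proj_points N. \<forall>f\<in>F. cpoly_eval f x = 0}"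
    using A(1) unfolding proj_closed_def by blast
  obtain f where f: "f \<in> F" "cpoly_eval f y \<noteq> 0"
    using y F(2) by blast
  have "cpoly_eval f (\<lambda>v. 0) = 0"
  proof (rule ccontr)
    assume "cpoly_eval f (\<lambda>v. 0) \<noteq> 0"
    then have "cpoly_eval f x \<noteq> 0" for x
      using homogeneous_constant_if_nonzero_at_0[of f x] F(1) f(1) by simp
    then show False
      using A(2) F(2) f(1) by blast
  qed
  moreover have "\<forall>x\<in>A. cpoly_eval f x = 0"
    using F(2) f(1) by blast
  ultimately show ?thesis
    using that f(2) by blast
qed

lemma zariski_closure_closed: "A \<subseteq> proj_points N \<Longrightarrow> proj_closed N (zariski_closure N A)"
  unfolding zariski_closure_def
  by (rule proj_closed_Inter) (use proj_closed_proj_points[of N] in auto)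

lemma zariski_closure_minimal: "proj_closed N S \<Longrightarrow> A \<subseteq> S \<Longrightarrow> zariski_closure N A \<subseteq> S"
  unfolding zariski_closure_def by blast

lemma zariski_closure_upper: "A \<subseteq> proj_points N \<Longrightarrow> A \<subseteq> zariski_closure N A"
  unfolding zariski_closure_def by blast

lemma zariski_closure_mono: "A \<subseteq> B \<Longrightarrow> zariski_closure N A \<subseteq> zariski_closure N B"
  unfolding zariski_closure_def by blast

lemma zariski_closure_strict_mono:
  assumes "Y \<subseteq> Y'" "Y' \<subseteq> proj_points N" "homogeneous f" "\<forall>x\<in>Y. cpoly_eval f x = 0"
    and "y \<in> Y'" "cpoly_eval f y \<noteq> 0"
  shows "zariski_closure N Y \<subset> zariski_closure N Y'"
proof -
  let ?V = "{x \<in> proj_points N. cpoly_eval f x = 0}"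
  have "zariski_closure N Y \<subseteq> ?V"
    using assms(1,2,4) by (intro zariski_closure_minimal proj_closed_zero_set[OF proj_closed_proj_points assms(3)]) auto
  moreover have "y \<in> zariski_closure N Y'"
    using zariski_closure_upper[OF assms(2)] assms(5) by blast
  ultimately show ?thesis
    using zariski_closure_mono[OF assms(1)] assms(6) by blast
qed

definition scaling_poly :: "'v poly_list \<Rightarrow> ('v \<Rightarrow> complex) \<Rightarrow> complex poly" where
  "scaling_poly L x = (\<Sum>(c, m)\<leftarrow>L. monom (c * monomial_eval m x) (mono_deg m))"

definition homogeneous_part :: "nat \<Rightarrow> 'v poly_list \<Rightarrow> 'v poly_list" where
  "homogeneous_part d L = filter (\<lambda>(c, m). mono_deg m = d) L"

lemma poly_scaling_poly: "poly (scaling_poly L x) t = poly_list_eval L (\<lambda>v. t * x v)"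
  by (induction L) (auto simp: scaling_poly_def poly_monom monomial_eval_scale mult_ac)

lemma coeff_scaling_poly: "coeff (scaling_poly L x) d = poly_list_eval (homogeneous_part d L) x"
  by (induction L) (auto simp: scaling_poly_def homogeneous_part_def coeff_monom)

lemma poly_eq_0_if_vanishes_off_0:
  fixes p :: "complex poly"
  assumes "\<And>t. t \<noteq> 0 \<Longrightarrow> poly p t = 0"
  shows "p = 0"
proof (rule ccontr)
  assume "p \<noteq> 0"
  then have "finite {t. poly p t = 0}"
    by (rule poly_roots_finite)
  then have "finite (UNIV - {0::complex})"
    by (rule finite_subset[rotated]) (use assms in auto)
  then show False
    using infinite_UNIV_char_0[where 'a=complex] by simp
qed

lemma homogeneous_part_nonzero:
  assumes "poly_list_eval L x \<noteq> 0"
  obtains d where "poly_list_eval (homogeneous_part d L) x \<noteq> 0"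
proof -
  have "scaling_poly L x \<noteq> 0"
    using assms poly_scaling_poly[of L x 1] by auto
  then show ?thesis
    using that by (auto simp: poly_eq_iff coeff_scaling_poly)
qed

text \<open>Since \<open>Z\<close> is a cone, \<open>f g = 0\<close> on \<open>Z\<close> forces at each point \<open>x\<close> one of the polynomials
  \<open>t \<mapsto> f (t x)\<close>, \<open>t \<mapsto> g (t x)\<close> to vanish, so \<open>Z\<close> is the union of the zero sets of a homogeneous
  part of \<open>f\<close> and of one of \<open>g\<close>.\<close>

lemma irreducible_no_zero_divisors:
  assumes irr: "proj_irreducible N Z" and f: "f \<in> poly_funs S" and g: "g \<in> poly_funs S"
    and fg: "\<forall>x\<in>Z. f x * g x = 0"
  shows "(\<forall>x\<in>Z. f x = 0) \<or> (\<forall>x\<in>Z. g x = 0)"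
proof (rule ccontr)
  obtain L1 L2 where L: "f = poly_list_eval L1" "g = poly_list_eval L2"
    using f g by (metis poly_funsE)
  assume "\<not> ?thesis"
  then obtain x1 x2 where x1: "x1 \<in> Z" "f x1 \<noteq> 0" and x2: "x2 \<in> Z" "g x2 \<noteq> 0"
    by blast
  obtain d where d: "poly_list_eval (homogeneous_part d L1) x1 \<noteq> 0"
    using x1(2) L(1) homogeneous_part_nonzero by blast
  obtain e where e: "poly_list_eval (homogeneous_part e L2) x2 \<noteq> 0"
    using x2(2) L(2) homogeneous_part_nonzero by blast
  have cl: "proj_closed N Z"
    using irr unfolding proj_irreducible_def by blast
  let ?A = "{x\<in>Z. poly_list_eval (homogeneous_part d L1) x = 0}"
  let ?B = "{x\<in>Z. poly_list_eval (homogeneous_part e L2) x = 0}"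
  have A: "proj_closed N ?A" and B: "proj_closed N ?B"
    by (rule proj_closed_zero_set_list[OF cl], force simp: homogeneous_part_def)+
  have "Z \<subseteq> ?A \<union> ?B"
  proof
    fix x assume x: "x \<in> Z"
    have "poly (scaling_poly L1 x * scaling_poly L2 x) t = 0" if "t \<noteq> 0" for t
      using fg proj_closed_scale[OF cl x that] by (simp add: poly_scaling_poly L)
    then have "scaling_poly L1 x * scaling_poly L2 x = 0"
      by (rule poly_eq_0_if_vanishes_off_0)
    then show "x \<in> ?A \<union> ?B"
      using x by (auto simp flip: coeff_scaling_poly)
  qed
  then have "Z = ?A \<union> ?B"
    by blast
  then have "Z = ?A \<or> Z = ?B"
    using irr A B unfolding proj_irreducible_def by blast
  then show False
    using x1(1) x2(1) d e by blast
qed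

section \<open>Homogeneous linear systems over a subring without zero divisors\<close>

context
  fixes A :: "'r::comm_ring set"
  assumes add: "\<And>a b. a \<in> A \<Longrightarrow> b \<in> A \<Longrightarrow> a + b \<in> A"
    and mult: "\<And>a b. a \<in> A \<Longrightarrow> b \<in> A \<Longrightarrow> a * b \<in> A"
    and uminus: "\<And>a. a \<in> A \<Longrightarrow> - a \<in> A"
    and zero: "0 \<in> A"
    and no_zero_divisors: "\<And>a b. a \<in> A \<Longrightarrow> b \<in> A \<Longrightarrow> a * b = 0 \<Longrightarrow> a = 0 \<or> b = 0"
begin

text \<open>One step of Gaussian elimination with pivot \<open>v i\<^sub>0 j \<noteq> 0\<close>: a solution of the system with
  \<open>i\<^sub>0\<close> and equation \<open>j\<close> eliminated lifts to a solution of the full system.\<close>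

lemma linear_system_lift_solution:
  fixes v :: "'i \<Rightarrow> 'j \<Rightarrow> 'r"
  assumes I: "finite I" "i0 \<in> I" and v: "\<forall>i\<in>I. v i j \<in> A" "v i0 j \<noteq> 0"
    and e: "\<forall>i\<in>I - {i0}. e i \<in> A" "\<exists>i\<in>I - {i0}. e i \<noteq> 0"
  defines "e' \<equiv> \<lambda>i. if i = i0 then - (\<Sum>k\<in>I - {i0}. e k * v k j) else v i0 j * e i"
  shows "\<forall>i\<in>I. e' i \<in> A" "\<exists>i\<in>I. e' i \<noteq> 0"
    "(\<Sum>i\<in>I. e' i * v i j') = (\<Sum>i\<in>I - {i0}. e i * (v i0 j * v i j' - v i j * v i0 j'))"
proof -
  have sum: "(\<Sum>k\<in>K. f k) \<in> A" if "\<And>k. k \<in> K \<Longrightarrow> f k \<in> A" for K :: "'i set" and f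
    using that by (induction K rule: infinite_finite_induct) (auto intro: zero add)
  show "\<forall>i\<in>I. e' i \<in> A"
    using e(1) v(1) I(2) unfolding e'_def by (auto intro!: uminus sum mult)
  obtain i where i: "i \<in> I - {i0}" "e i \<noteq> 0"
    using e(2) by blast
  then have "v i0 j * e i \<noteq> 0"
    using no_zero_divisors[of "v i0 j" "e i"] e(1) v I(2) by blast
  then show "\<exists>i\<in>I. e' i \<noteq> 0"
    using i unfolding e'_def by auto
  have "(\<Sum>i\<in>I. e' i * v i j') = - (\<Sum>k\<in>I - {i0}. e k * v k j) * v i0 j' + (\<Sum>i\<in>I - {i0}. v i0 j * e i * v i j')"
    using I unfolding e'_def by (simp add: sum.remove)
  also have "\<dots> = (\<Sum>i\<in>I - {i0}. e i * (v i0 j * v i j' - v i j * v i0 j'))"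
    by (simp add: sum_distrib_left sum_distrib_right sum_subtractf right_diff_distrib mult_ac)
  finally show "(\<Sum>i\<in>I. e' i * v i j') = (\<Sum>i\<in>I - {i0}. e i * (v i0 j * v i j' - v i j * v i0 j'))" .
qed

text \<open>The subring \<open>A\<close> need not contain \<open>1\<close>; the nonzero element \<open>u\<close> replaces it.\<close>

lemma subring_linear_system_nontrivial_solution:
  fixes v :: "'i \<Rightarrow> 'j \<Rightarrow> 'r"
  assumes u: "u \<in> A" "u \<noteq> 0"
  shows "finite J \<Longrightarrow> finite I \<Longrightarrow> card J < card I \<Longrightarrow> \<forall>i\<in>I. \<forall>j\<in>J. v i j \<in> A \<Longrightarrow>
    \<exists>e. (\<forall>i\<in>I. e i \<in> A) \<and> (\<exists>i\<in>I. e i \<noteq> 0) \<and> (\<forall>j\<in>J. (\<Sum>i\<in>I. e i * v i j) = 0)"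
proof (induction J arbitrary: I v rule: finite_induct)
  case empty
  then obtain i0 where "i0 \<in> I"
    by fastforce
  then show ?case
    using u zero by (intro exI[of _ "\<lambda>i. if i = i0 then u else 0"]) auto
next
  case (insert j J)
  show ?case
  proof (cases "\<forall>i\<in>I. v i j = 0")
    case True
    have "card J < card I"
      using insert by simp
    then obtain e where "\<forall>i\<in>I. e i \<in> A" "\<exists>i\<in>I. e i \<noteq> 0" "\<forall>j'\<in>J. (\<Sum>i\<in>I. e i * v i j') = 0"
      using insert.IH[of I v] insert.prems by blast
    then show ?thesis
      using True by (intro exI[of _ e]) auto
  next
    case False
    then obtain i0 where i0: "i0 \<in> I" "v i0 j \<noteq> 0"
      by blast
    define w where "w i j' = v i0 j * v i j' - v i j * v i0 j'" for i j'
    have "w i j' \<in> A" if "i \<in> I" "j' \<in> J" for i j'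
    proof -
      have "v i0 j * v i j' + - (v i j * v i0 j') \<in> A"
        using insert.prems(3) i0(1) that by (intro add mult uminus) auto
      then show ?thesis
        by (simp add: w_def)
    qed
    then have "\<forall>i\<in>I - {i0}. \<forall>j'\<in>J. w i j' \<in> A"
      by blast
    moreover have "card J < card (I - {i0})"
      using insert.prems insert.hyps i0(1) by (simp add: card_Diff_singleton)
    ultimately obtain e where e: "\<forall>i\<in>I - {i0}. e i \<in> A" "\<exists>i\<in>I - {i0}. e i \<noteq> 0"
        "\<forall>j'\<in>J. (\<Sum>i\<in>I - {i0}. e i * w i j') = 0"
      using insert.IH[of "I - {i0}" w] insert.prems(1) by auto
    have v_j: "\<forall>i\<in>I. v i j \<in> A"
      using insert.prems(3) by blast
    have "(\<Sum>i\<in>I - {i0}. e i * w i j') = 0" if "j' \<in> insert j J" for j'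
      using that e(3) by (auto simp: w_def mult.commute)
    then show ?thesis
      using linear_system_lift_solution[where v = v and j = j and e = e, OF insert.prems(1) i0(1) v_j i0(2) e(1,2)]
      unfolding w_def by (intro exI) auto
  qed
qed

end

section \<open>Algebraic dependence on an irreducible closed set\<close>

definition alg_indep_on :: "('v \<Rightarrow> complex) set \<Rightarrow> 'v set \<Rightarrow> bool" where
  "alg_indep_on Z S \<longleftrightarrow> (\<forall>F\<in>poly_funs S. (\<forall>x\<in>Z. F x = 0) \<longrightarrow> (\<forall>x. F x = 0))"

definition algebraic_on :: "('v \<Rightarrow> complex) set \<Rightarrow> 'v set \<Rightarrow> (('v \<Rightarrow> complex) \<Rightarrow> complex) \<Rightarrow> bool" where
  "algebraic_on Z S f \<longleftrightarrow> (\<exists>k a. (\<forall>i\<le>k. a i \<in> poly_funs S) \<and> (\<exists>i\<le>k. \<exists>x\<in>Z. a i x \<noteq> 0) \<and>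
      (\<forall>x\<in>Z. (\<Sum>i\<le>k. a i x * f x ^ i) = 0))"

definition poly_span_on :: "('v \<Rightarrow> complex) set \<Rightarrow> 'v set \<Rightarrow> 'b set \<Rightarrow>
    ('b \<Rightarrow> ('v \<Rightarrow> complex) \<Rightarrow> complex) \<Rightarrow> (('v \<Rightarrow> complex) \<Rightarrow> complex) set" where
  "poly_span_on Z S B \<beta> =
    {f. \<exists>\<gamma>. (\<forall>b\<in>B. \<gamma> b \<in> poly_funs S) \<and> (\<forall>x\<in>Z. f x = (\<Sum>b\<in>B. \<gamma> b x * \<beta> b x))}"

lemma alg_indep_on_mono: "Z \<subseteq> Z' \<Longrightarrow> alg_indep_on Z S \<Longrightarrow> alg_indep_on Z' S"
  unfolding alg_indep_on_def by blast

lemma alg_indep_onD: "alg_indep_on Z S \<Longrightarrow> F \<in> poly_funs S \<Longrightarrow> \<forall>x\<in>Z. F x = 0 \<Longrightarrow> F x = 0"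
  unfolding alg_indep_on_def by blast

lemma poly_span_on_cong:
  "f \<in> poly_span_on Z S B \<beta> \<Longrightarrow> (\<And>x. x \<in> Z \<Longrightarrow> f x = g x) \<Longrightarrow> g \<in> poly_span_on Z S B \<beta>"
  unfolding poly_span_on_def by auto

lemma poly_span_on_generator:
  assumes "finite B" "b \<in> B"
  shows "\<beta> b \<in> poly_span_on Z S B \<beta>"
proof -
  have "(\<Sum>b'\<in>B. (if b' = b then 1 else 0) * \<beta> b' x) = \<beta> b x" for x
    using assms by (simp add: if_distrib[of "\<lambda>c. c * _"] sum.delta' cong: if_cong)
  then show ?thesis
    unfolding poly_span_on_def using poly_funs_const
    by (intro CollectI exI[of _ "\<lambda>b' x. if b' = b then 1 else 0"]) auto
qed

lemma poly_span_on_add: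
  assumes "f \<in> poly_span_on Z S B \<beta>" "g \<in> poly_span_on Z S B \<beta>"
  shows "(\<lambda>x. f x + g x) \<in> poly_span_on Z S B \<beta>"
proof -
  obtain \<gamma> \<delta> where "\<forall>b\<in>B. \<gamma> b \<in> poly_funs S" "\<forall>x\<in>Z. f x = (\<Sum>b\<in>B. \<gamma> b x * \<beta> b x)"
    "\<forall>b\<in>B. \<delta> b \<in> poly_funs S" "\<forall>x\<in>Z. g x = (\<Sum>b\<in>B. \<delta> b x * \<beta> b x)"
    using assms unfolding poly_span_on_def by blast
  then show ?thesis
    unfolding poly_span_on_def
    by (intro CollectI exI[of _ "\<lambda>b x. \<gamma> b x + \<delta> b x"]) (auto intro: poly_funs_add simp: sum.distrib distrib_right)
qed

lemma poly_span_on_scale: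
  assumes "a \<in> poly_funs S" "f \<in> poly_span_on Z S B \<beta>"
  shows "(\<lambda>x. a x * f x) \<in> poly_span_on Z S B \<beta>"
proof -
  obtain \<gamma> where "\<forall>b\<in>B. \<gamma> b \<in> poly_funs S" "\<forall>x\<in>Z. f x = (\<Sum>b\<in>B. \<gamma> b x * \<beta> b x)"
    using assms(2) unfolding poly_span_on_def by blast
  then show ?thesis
    unfolding poly_span_on_def using assms(1)
    by (intro CollectI exI[of _ "\<lambda>b x. a x * \<gamma> b x"]) (auto intro: poly_funs_mult simp: sum_distrib_left mult_ac)
qed

lemma poly_span_on_sum:
  assumes "finite I" "\<And>i. i \<in> I \<Longrightarrow> f i \<in> poly_span_on Z S B \<beta>"
  shows "(\<lambda>x. \<Sum>i\<in>I. f i x) \<in> poly_span_on Z S B \<beta>"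
  using assms
proof (induction I rule: finite_induct)
  case empty
  have "(\<lambda>x. 0) \<in> poly_span_on Z S B \<beta>"
    unfolding poly_span_on_def using poly_funs_const by (intro CollectI exI[of _ "\<lambda>b x. 0"]) auto
  then show ?case
    by simp
next
  case (insert i I)
  then show ?case
    using poly_span_on_add[of "f i" Z S B \<beta> "\<lambda>x. \<Sum>i\<in>I. f i x"] by simp
qed

lemma poly_span_on_mult:
  assumes "f \<in> poly_span_on Z S B \<beta>" "g \<in> poly_span_on Z S C \<delta>" "finite B" "finite C"
  shows "(\<lambda>x. f x * g x) \<in> poly_span_on Z S (B \<times> C) (\<lambda>(b, c) x. \<beta> b x * \<delta> c x)"
proof -
  obtain \<gamma> \<eta> where \<gamma>: "\<forall>b\<in>B. \<gamma> b \<in> poly_funs S" "\<forall>x\<in>Z. f x = (\<Sum>b\<in>B. \<gamma> b x * \<beta> b x)"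
    and \<eta>: "\<forall>c\<in>C. \<eta> c \<in> poly_funs S" "\<forall>x\<in>Z. g x = (\<Sum>c\<in>C. \<eta> c x * \<delta> c x)"
    using assms(1,2) unfolding poly_span_on_def by blast
  have "f x * g x = (\<Sum>(b, c)\<in>B \<times> C. (\<gamma> b x * \<eta> c x) * (\<beta> b x * \<delta> c x))" if "x \<in> Z" for x
    using that \<gamma>(2) \<eta>(2) assms(3,4)
    by (simp add: sum_product sum.cartesian_product mult_ac)
  moreover have "\<forall>bc\<in>B \<times> C. (\<lambda>x. \<gamma> (fst bc) x * \<eta> (snd bc) x) \<in> poly_funs S"
    using \<gamma>(1) \<eta>(1) by (auto intro: poly_funs_mult)
  ultimately show ?thesis
    unfolding poly_span_on_def
    by (intro CollectI exI[of _ "\<lambda>bc x. \<gamma> (fst bc) x * \<eta> (snd bc) x"]) (auto simp: case_prod_beta)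
qed

lemma sum_apply: "(\<Sum>i\<in>I. f i) x = (\<Sum>i\<in>I. f i x)"
  by (induction I rule: infinite_finite_induct) auto

definition restrict_zero :: "'a set \<Rightarrow> ('a \<Rightarrow> complex) \<Rightarrow> 'a \<Rightarrow> complex" where
  "restrict_zero Z F = (\<lambda>x. if x \<in> Z then F x else 0)"

lemma restrict_zero_eq_0_iff: "restrict_zero Z F = 0 \<longleftrightarrow> (\<forall>x\<in>Z. F x = 0)"
  by (auto simp: restrict_zero_def fun_eq_iff)

lemma restrict_zero_ops:
  "restrict_zero Z F + restrict_zero Z G = restrict_zero Z (\<lambda>x. F x + G x)"
  "restrict_zero Z F * restrict_zero Z G = restrict_zero Z (\<lambda>x. F x * G x)"
  "- restrict_zero Z F = restrict_zero Z (\<lambda>x. - F x)"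
  by (auto simp: restrict_zero_def fun_eq_iff)

text \<open>Restricted to an irreducible \<open>Z\<close>, the polynomial functions form a ring without zero
  divisors, to which the elimination above applies.\<close>

lemma irreducible_linear_system_nontrivial_solution:
  assumes irr: "proj_irreducible N Z" and fin: "finite I" "finite J" "card J < card I"
    and v: "\<And>i j. i \<in> I \<Longrightarrow> j \<in> J \<Longrightarrow> v i j \<in> poly_funs S"
  obtains e where "\<forall>i\<in>I. e i \<in> poly_funs S" "\<exists>i\<in>I. \<exists>x\<in>Z. e i x \<noteq> 0"
    "\<forall>j\<in>J. \<forall>x\<in>Z. (\<Sum>i\<in>I. e i x * v i j x) = 0"
proof -
  let ?\<rho> = "restrict_zero Z"
  let ?A = "?\<rho> ` poly_funs S"
  have "\<exists>e. (\<forall>i\<in>I. e i \<in> ?A) \<and> (\<exists>i\<in>I. e i \<noteq> 0) \<and> (\<forall>j\<in>J. (\<Sum>i\<in>I. e i * ?\<rho> (v i j)) = 0)"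
  proof (rule subring_linear_system_nontrivial_solution[where u = "?\<rho> (\<lambda>x. 1)"])
    show "a + b \<in> ?A" "a * b \<in> ?A" if "a \<in> ?A" "b \<in> ?A" for a b
      using that by (auto simp: restrict_zero_ops intro!: imageI poly_funs_add poly_funs_mult)
    show "- a \<in> ?A" if "a \<in> ?A" for a
      using that by (auto simp: restrict_zero_ops intro!: imageI poly_funs_uminus)
    show "a = 0 \<or> b = 0" if ab: "a \<in> ?A" "b \<in> ?A" "a * b = 0" for a b
    proof -
      obtain F G where "F \<in> poly_funs S" "G \<in> poly_funs S" "a = ?\<rho> F" "b = ?\<rho> G"
        using ab(1,2) by blast
      then show ?thesis
        using ab(3) irreducible_no_zero_divisors[OF irr, of F S G]
        by (simp add: restrict_zero_ops restrict_zero_eq_0_iff)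
    qed
    have "Z \<noteq> {}"
      using irr unfolding proj_irreducible_def by blast
    then show "?\<rho> (\<lambda>x. 1) \<noteq> 0"
      by (simp add: restrict_zero_eq_0_iff)
    show "0 \<in> ?A" "?\<rho> (\<lambda>x. 1) \<in> ?A"
      using poly_funs_const[of 0 S] poly_funs_const[of 1 S] restrict_zero_eq_0_iff[of Z "\<lambda>x. 0"] by auto
  qed (use fin v in auto)
  then obtain e where e: "\<forall>i\<in>I. e i \<in> ?A" "\<exists>i\<in>I. e i \<noteq> 0" "\<forall>j\<in>J. (\<Sum>i\<in>I. e i * ?\<rho> (v i j)) = 0"
    by blast
  have "\<forall>i\<in>I. \<exists>F. F \<in> poly_funs S \<and> e i = ?\<rho> F"
    using e(1) by blast
  then obtain \<epsilon> where \<epsilon>: "\<forall>i\<in>I. \<epsilon> i \<in> poly_funs S \<and> e i = ?\<rho> (\<epsilon> i)"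
    by (rule bchoice[THEN exE])
  have "(\<Sum>i\<in>I. \<epsilon> i x * v i j x) = 0" if "j \<in> J" "x \<in> Z" for j x
  proof -
    have "(\<Sum>i\<in>I. e i * ?\<rho> (v i j)) x = 0"
      using e(3) that(1) by simp
    then show ?thesis
      using \<epsilon> that(2) by (simp add: restrict_zero_def sum_apply)
  qed
  moreover have "\<exists>i\<in>I. \<exists>x\<in>Z. \<epsilon> i x \<noteq> 0"
    using e(2) \<epsilon> restrict_zero_eq_0_iff by metis
  ultimately show ?thesis
    using that[of \<epsilon>] \<epsilon> by blast
qed

text \<open>The standard finiteness argument: the \<open>card B + 1\<close> functions \<open>(c g)\<^sup>m\<close>, \<open>m \<le> card B\<close>,
  lie in a module with \<open>card B\<close> generators, so they are linearly dependent.\<close>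

lemma algebraic_on_if_powers_in_span:
  assumes irr: "proj_irreducible N Z"
    and c: "c \<in> poly_funs S" "\<exists>x\<in>Z. c x \<noteq> 0"
    and B: "finite B"
    and span: "\<And>m. (\<lambda>x. c x ^ m * g x ^ m) \<in> poly_span_on Z S B \<beta>"
  shows "algebraic_on Z S g"
proof -
  have "\<forall>m. \<exists>\<gamma>. (\<forall>b\<in>B. \<gamma> b \<in> poly_funs S) \<and> (\<forall>x\<in>Z. c x ^ m * g x ^ m = (\<Sum>b\<in>B. \<gamma> b x * \<beta> b x))"
    using span unfolding poly_span_on_def by blast
  then obtain \<Gamma> where \<Gamma>: "\<forall>m. (\<forall>b\<in>B. \<Gamma> m b \<in> poly_funs S) \<and>
      (\<forall>x\<in>Z. c x ^ m * g x ^ m = (\<Sum>b\<in>B. \<Gamma> m b x * \<beta> b x))"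
    by (rule choice[THEN exE])
  obtain e where e: "\<forall>i\<in>{..card B}. e i \<in> poly_funs S" "\<exists>i\<in>{..card B}. \<exists>x\<in>Z. e i x \<noteq> 0"
    "\<forall>b\<in>B. \<forall>x\<in>Z. (\<Sum>i\<in>{..card B}. e i x * \<Gamma> i b x) = 0"
    by (rule irreducible_linear_system_nontrivial_solution[OF irr, where I = "{..card B}" and J = B and v = \<Gamma>])
      (use \<Gamma> B in auto)
  define a where "a i = (\<lambda>x. e i x * c x ^ i)" for i
  have "\<forall>i\<le>card B. a i \<in> poly_funs S"
    using e(1) c(1) unfolding a_def by (auto intro: poly_funs_mult poly_funs_power)
  moreover have "\<exists>i\<le>card B. \<exists>x\<in>Z. a i x \<noteq> 0"
  proof -
    obtain i where i: "i \<le> card B" "\<exists>x\<in>Z. e i x \<noteq> 0"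
      using e(2) by auto
    moreover have "\<exists>x\<in>Z. c x ^ i \<noteq> 0"
      using c(2) by auto
    moreover have "e i \<in> poly_funs S" "(\<lambda>x. c x ^ i) \<in> poly_funs S"
      using e(1) i(1) c(1) by (auto intro: poly_funs_power)
    ultimately have "\<exists>x\<in>Z. e i x * c x ^ i \<noteq> 0"
      using irreducible_no_zero_divisors[OF irr] by blast
    then show ?thesis
      using i(1) unfolding a_def by blast
  qed
  moreover have "(\<Sum>i\<le>card B. a i x * g x ^ i) = 0" if x: "x \<in> Z" for x
  proof -
    have "(\<Sum>i\<le>card B. a i x * g x ^ i) = (\<Sum>i\<le>card B. e i x * (\<Sum>b\<in>B. \<Gamma> i b x * \<beta> b x))"
      using \<Gamma> x unfolding a_def by (simp add: mult.assoc power_mult_distrib)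
    also have "\<dots> = (\<Sum>b\<in>B. (\<Sum>i\<le>card B. e i x * \<Gamma> i b x) * \<beta> b x)"
      by (simp add: sum_distrib_left sum_distrib_right mult_ac sum.swap[of _ B])
    also have "\<dots> = 0"
      using e(3) x by simp
    finally show ?thesis .
  qed
  ultimately show ?thesis
    unfolding algebraic_on_def by blast
qed

lemma algebraic_on_leading_coeff:
  assumes "algebraic_on Z S g"
  obtains q a where "\<forall>i\<le>Suc q. a i \<in> poly_funs S" "\<exists>x\<in>Z. a (Suc q) x \<noteq> 0"
    "\<forall>x\<in>Z. (\<Sum>i\<le>Suc q. a i x * g x ^ i) = 0"
proof -
  obtain k a where a: "\<forall>i\<le>k. a i \<in> poly_funs S" "\<exists>i\<le>k. \<exists>x\<in>Z. a i x \<noteq> 0"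
      "\<forall>x\<in>Z. (\<Sum>i\<le>k. a i x * g x ^ i) = 0"
    using assms unfolding algebraic_on_def by blast
  define p where "p = Max {i. i \<le> k \<and> (\<exists>x\<in>Z. a i x \<noteq> 0)}"
  have p: "p \<le> k" "\<exists>x\<in>Z. a p x \<noteq> 0" and above_p: "\<And>i x. p < i \<Longrightarrow> i \<le> k \<Longrightarrow> x \<in> Z \<Longrightarrow> a i x = 0"
    using Max_in[of "{i. i \<le> k \<and> (\<exists>x\<in>Z. a i x \<noteq> 0)}"] Max_ge[of "{i. i \<le> k \<and> (\<exists>x\<in>Z. a i x \<noteq> 0)}"] a(2)
    unfolding p_def by fastforce+
  have rel: "(\<Sum>i\<le>p. a i x * g x ^ i) = 0" if x: "x \<in> Z" for x
  proof -
    have "(\<Sum>i\<le>k. a i x * g x ^ i) = (\<Sum>i\<le>p. a i x * g x ^ i)"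
      by (rule sum.mono_neutral_right) (use p(1) above_p x in auto)
    then show ?thesis
      using a(3) x by simp
  qed
  have "p \<noteq> 0"
  proof
    assume "p = 0"
    then show False
      using rel p(2) by simp
  qed
  then obtain q where "p = Suc q"
    using not0_implies_Suc by blast
  then show ?thesis
    using that[of q a] a(1) p rel by auto
qed

lemma powers_in_span_of_relation:
  assumes a: "\<forall>i\<le>Suc q. a i \<in> poly_funs S" and rel: "\<forall>x\<in>Z. (\<Sum>i\<le>Suc q. a i x * g x ^ i) = 0"
  shows "(\<lambda>x. a (Suc q) x ^ m * g x ^ m) \<in> poly_span_on Z S {..q} (\<lambda>i x. g x ^ i)"
proof (induction m)
  case 0
  show ?case
    using poly_span_on_generator[of "{..q}" 0 "\<lambda>i x. g x ^ i" Z S] by simp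
next
  case (Suc m)
  then obtain \<gamma> where \<gamma>: "\<forall>i\<le>q. \<gamma> i \<in> poly_funs S"
    "\<forall>x\<in>Z. a (Suc q) x ^ m * g x ^ m = (\<Sum>i\<le>q. \<gamma> i x * g x ^ i)"
    unfolding poly_span_on_def by auto
  let ?lead = "a (Suc q)"
  have "(\<lambda>x. \<Sum>i<q. (?lead x * \<gamma> i x) * g x ^ Suc i) \<in> poly_span_on Z S {..q} (\<lambda>i x. g x ^ i)"
    using a \<gamma>(1) by (intro poly_span_on_sum poly_span_on_scale poly_funs_mult poly_span_on_generator) auto
  moreover have "(\<lambda>x. \<Sum>i\<le>q. (- \<gamma> q x * a i x) * g x ^ i) \<in> poly_span_on Z S {..q} (\<lambda>i x. g x ^ i)"
    using a \<gamma>(1) by (intro poly_span_on_sum poly_span_on_scale poly_funs_mult poly_funs_uminus poly_span_on_generator) auto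
  ultimately have "(\<lambda>x. (\<Sum>i<q. (?lead x * \<gamma> i x) * g x ^ Suc i) + (\<Sum>i\<le>q. (- \<gamma> q x * a i x) * g x ^ i))
      \<in> poly_span_on Z S {..q} (\<lambda>i x. g x ^ i)"
    by (rule poly_span_on_add)
  moreover have "(\<Sum>i<q. (?lead x * \<gamma> i x) * g x ^ Suc i) + (\<Sum>i\<le>q. (- \<gamma> q x * a i x) * g x ^ i)
      = ?lead x ^ Suc m * g x ^ Suc m"
    if x: "x \<in> Z" for x
  proof -
    have top: "?lead x * g x ^ Suc q = - (\<Sum>i\<le>q. a i x * g x ^ i)"
      using rel x by (simp add: eq_neg_iff_add_eq_0 add.commute)
    have "?lead x ^ Suc m * g x ^ Suc m = ?lead x * g x * (\<Sum>i\<le>q. \<gamma> i x * g x ^ i)"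
      using \<gamma>(2) x by (simp add: mult_ac)
    also have "\<dots> = (\<Sum>i<q. (?lead x * \<gamma> i x) * g x ^ Suc i) + \<gamma> q x * (?lead x * g x ^ Suc q)"
      by (simp add: lessThan_Suc_atMost[symmetric] sum_distrib_left distrib_left mult_ac)
    finally show ?thesis
      unfolding top by (simp add: sum_distrib_left sum_negf mult_ac)
  qed
  ultimately show ?case
    by (rule poly_span_on_cong)
qed

lemma algebraic_on_pair_in_span:
  assumes irr: "proj_irreducible N Z" and g: "algebraic_on Z S g" and h: "algebraic_on Z S h"
  obtains a b and B :: "(nat \<times> nat) set" and \<beta>
  where "a \<in> poly_funs S" "b \<in> poly_funs S" "\<exists>x\<in>Z. a x * b x \<noteq> 0" "finite B"
    "\<And>i j. (\<lambda>x. (a x ^ i * g x ^ i) * (b x ^ j * h x ^ j)) \<in> poly_span_on Z S B \<beta>"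
proof -
  obtain q a where a: "\<forall>i\<le>Suc q. a i \<in> poly_funs S" "\<exists>x\<in>Z. a (Suc q) x \<noteq> 0"
    "\<forall>x\<in>Z. (\<Sum>i\<le>Suc q. a i x * g x ^ i) = 0"
    using algebraic_on_leading_coeff[OF g] by blast
  obtain r b where b: "\<forall>i\<le>Suc r. b i \<in> poly_funs S" "\<exists>x\<in>Z. b (Suc r) x \<noteq> 0"
    "\<forall>x\<in>Z. (\<Sum>i\<le>Suc r. b i x * h x ^ i) = 0"
    using algebraic_on_leading_coeff[OF h] by blast
  have lead: "a (Suc q) \<in> poly_funs S" "b (Suc r) \<in> poly_funs S"
    using a(1) b(1) by auto
  have nonzero: "\<exists>x\<in>Z. a (Suc q) x * b (Suc r) x \<noteq> 0"
    using irreducible_no_zero_divisors[OF irr lead] a(2) b(2) by blast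
  have span: "(\<lambda>x. (a (Suc q) x ^ i * g x ^ i) * (b (Suc r) x ^ j * h x ^ j))
      \<in> poly_span_on Z S ({..q} \<times> {..r}) (\<lambda>(i, j) x. g x ^ i * h x ^ j)" for i j
    using poly_span_on_mult[OF powers_in_span_of_relation[OF a(1,3)] powers_in_span_of_relation[OF b(1,3)]]
    by simp
  show ?thesis
    by (rule that[OF lead nonzero _ span]) simp
qed

lemma algebraic_on_mult:
  assumes "proj_irreducible N Z" "algebraic_on Z S g" "algebraic_on Z S h"
  shows "algebraic_on Z S (\<lambda>x. g x * h x)"
proof -
  obtain a b and B :: "(nat \<times> nat) set" and \<beta> where ab: "a \<in> poly_funs S" "b \<in> poly_funs S"
    "\<exists>x\<in>Z. a x * b x \<noteq> 0" "finite B"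
    "\<And>i j. (\<lambda>x. (a x ^ i * g x ^ i) * (b x ^ j * h x ^ j)) \<in> poly_span_on Z S B \<beta>"
    using algebraic_on_pair_in_span[OF assms] by blast
  show ?thesis
  proof (rule algebraic_on_if_powers_in_span[OF assms(1) poly_funs_mult[OF ab(1,2)] ab(3,4)])
    show "(\<lambda>x. (a x * b x) ^ m * (g x * h x) ^ m) \<in> poly_span_on Z S B \<beta>" for m
      using ab(5)[of m m] by (rule poly_span_on_cong) (simp add: power_mult_distrib mult_ac)
  qed
qed

lemma algebraic_on_add:
  assumes "proj_irreducible N Z" "algebraic_on Z S g" "algebraic_on Z S h"
  shows "algebraic_on Z S (\<lambda>x. g x + h x)"
proof -
  obtain a b and B :: "(nat \<times> nat) set" and \<beta> where ab: "a \<in> poly_funs S" "b \<in> poly_funs S"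
    "\<exists>x\<in>Z. a x * b x \<noteq> 0" "finite B"
    "\<And>i j. (\<lambda>x. (a x ^ i * g x ^ i) * (b x ^ j * h x ^ j)) \<in> poly_span_on Z S B \<beta>"
    using algebraic_on_pair_in_span[OF assms] by blast
  show ?thesis
  proof (rule algebraic_on_if_powers_in_span[OF assms(1) poly_funs_mult[OF ab(1,2)] ab(3,4)])
    fix m
    let ?coeff = "\<lambda>i x. of_nat (m choose i) * a x ^ (m - i) * b x ^ i"
    have "(\<lambda>x. \<Sum>i\<le>m. ?coeff i x * ((a x ^ i * g x ^ i) * (b x ^ (m - i) * h x ^ (m - i))))
        \<in> poly_span_on Z S B \<beta>"
      using ab(1,2) by (intro poly_span_on_sum poly_span_on_scale ab(5))
        (auto intro!: poly_funs_mult poly_funs_power poly_funs_const)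
    moreover have "(\<Sum>i\<le>m. ?coeff i x * ((a x ^ i * g x ^ i) * (b x ^ (m - i) * h x ^ (m - i))))
        = (a x * b x) ^ m * (g x + h x) ^ m" for x
    proof -
      have "?coeff i x * ((a x ^ i * g x ^ i) * (b x ^ (m - i) * h x ^ (m - i)))
          = (a x * b x) ^ m * (of_nat (m choose i) * g x ^ i * h x ^ (m - i))" if "i \<in> {..m}" for i
      proof -
        have "(a x * b x) ^ m = (a x ^ (m - i) * a x ^ i) * (b x ^ i * b x ^ (m - i))"
          using that by (simp add: power_mult_distrib flip: power_add)
        then show ?thesis
          by (simp add: mult_ac)
      qed
      then have "(\<Sum>i\<le>m. ?coeff i x * ((a x ^ i * g x ^ i) * (b x ^ (m - i) * h x ^ (m - i))))
          = (\<Sum>i\<le>m. (a x * b x) ^ m * (of_nat (m choose i) * g x ^ i * h x ^ (m - i)))"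
        by (rule sum.cong[OF refl])
      also have "\<dots> = (a x * b x) ^ m * (g x + h x) ^ m"
        by (simp add: binomial_ring sum_distrib_left)
      finally show ?thesis .
    qed
    ultimately show "(\<lambda>x. (a x * b x) ^ m * (g x + h x) ^ m) \<in> poly_span_on Z S B \<beta>"
      by (rule poly_span_on_cong)
  qed
qed

lemma algebraic_on_poly_funs:
  assumes "Z \<noteq> {}" "F \<in> poly_funs S"
  shows "algebraic_on Z S F"
proof -
  define a where "a i = (if i = 0 then F else (\<lambda>x. -1))" for i :: nat
  have "\<forall>i\<le>1. a i \<in> poly_funs S"
    using assms(2) poly_funs_const[of "-1" S] unfolding a_def by auto
  moreover have "\<exists>i\<le>1. \<exists>x\<in>Z. a i x \<noteq> 0"
    using assms(1) unfolding a_def by force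
  moreover have "\<forall>x\<in>Z. (\<Sum>i\<le>1. a i x * F x ^ i) = 0"
    unfolding a_def by simp
  ultimately show ?thesis
    unfolding algebraic_on_def by blast
qed

lemma algebraic_on_cong:
  assumes "algebraic_on Z S f" "\<And>x. x \<in> Z \<Longrightarrow> f x = g x"
  shows "algebraic_on Z S g"
proof -
  obtain k a where "\<forall>i\<le>k. a i \<in> poly_funs S" "\<exists>i\<le>k. \<exists>x\<in>Z. a i x \<noteq> 0"
    "\<forall>x\<in>Z. (\<Sum>i\<le>k. a i x * f x ^ i) = 0"
    using assms(1) unfolding algebraic_on_def by blast
  then show ?thesis
    unfolding algebraic_on_def using assms(2) by (intro exI[of _ k] exI[of _ a]) simp
qed

lemma algebraic_on_prod:
  assumes "proj_irreducible N Z" "finite V" "\<And>v. v \<in> V \<Longrightarrow> algebraic_on Z S (f v)"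
  shows "algebraic_on Z S (\<lambda>x. \<Prod>v\<in>V. f v x)"
  using assms(2,3)
proof (induction V rule: finite_induct)
  case empty
  have "Z \<noteq> {}"
    using assms(1) unfolding proj_irreducible_def by blast
  then show ?case
    using algebraic_on_poly_funs[OF _ poly_funs_const[of 1 S]] by simp
next
  case (insert v V)
  then show ?case
    using algebraic_on_mult[OF assms(1), of S "f v" "\<lambda>x. \<Prod>v\<in>V. f v x"] by simp
qed

lemma algebraic_on_poly_list_eval:
  assumes irr: "proj_irreducible N Z" and vars: "\<And>j. algebraic_on Z S (\<lambda>x. x j)"
  shows "algebraic_on Z S (poly_list_eval L)"
proof (induction L)
  case Nil
  have "Z \<noteq> {}"
    using irr unfolding proj_irreducible_def by blast
  then have "algebraic_on Z S (\<lambda>x. 0)"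
    using algebraic_on_poly_funs[OF _ poly_funs_const] by blast
  then show ?case
    by (rule algebraic_on_cong) simp
next
  case (Cons p L)
  obtain c m where p: "p = (c, m)"
    by force
  have Z: "Z \<noteq> {}"
    using irr unfolding proj_irreducible_def by blast
  have "algebraic_on Z S (\<lambda>x. \<Prod>v\<in>Poly_Mapping.keys m. \<Prod>_<Poly_Mapping.lookup m v. x v)"
    by (intro algebraic_on_prod[OF irr] vars) auto
  then have "algebraic_on Z S (\<lambda>x. c * monomial_eval m x)"
    by (intro algebraic_on_mult[OF irr algebraic_on_poly_funs[OF Z poly_funs_const]])
      (simp add: monomial_eval_def)
  then show ?case
    using algebraic_on_add[OF irr _ Cons] by (simp add: p)
qed

definition poly_list_coeff :: "'v \<Rightarrow> nat \<Rightarrow> 'v poly_list \<Rightarrow> 'v poly_list" where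
  "poly_list_coeff j i L = map (\<lambda>(c, m). (c, Poly_Mapping.update j 0 m))
    (filter (\<lambda>(c, m). Poly_Mapping.lookup m j = i) L)"

lemma poly_list_vars_coeff: "poly_list_vars (poly_list_coeff j i L) \<subseteq> poly_list_vars L - {j}"
  by (induction L) (auto simp: poly_list_coeff_def keys_update)

lemma poly_list_coeff_Cons:
  "poly_list_coeff j i ((c, m) # L) = (if Poly_Mapping.lookup m j = i
    then [(c, Poly_Mapping.update j 0 m)] else []) @ poly_list_coeff j i L"
  by (simp add: poly_list_coeff_def)

lemma poly_list_eval_expand_var:
  assumes "\<forall>(c, m)\<in>set L. Poly_Mapping.lookup m j \<le> K"
  shows "poly_list_eval L x = (\<Sum>i\<le>K. poly_list_eval (poly_list_coeff j i L) x * x j ^ i)"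
  using assms
proof (induction L)
  case Nil
  then show ?case by (simp add: poly_list_coeff_def)
next
  case (Cons p L)
  obtain c m where p: "p = (c, m)"
    by force
  let ?m' = "Poly_Mapping.update j 0 m"
  have "(\<Sum>i\<le>K. poly_list_eval (poly_list_coeff j i (p # L)) x * x j ^ i)
      = (\<Sum>i\<le>K. if Poly_Mapping.lookup m j = i then c * monomial_eval ?m' x * x j ^ i else 0)
        + (\<Sum>i\<le>K. poly_list_eval (poly_list_coeff j i L) x * x j ^ i)"
  proof -
    have "poly_list_eval (poly_list_coeff j i (p # L)) x * x j ^ i
        = (if Poly_Mapping.lookup m j = i then c * monomial_eval ?m' x * x j ^ i else 0)
          + poly_list_eval (poly_list_coeff j i L) x * x j ^ i" for i
      by (simp add: p poly_list_coeff_Cons distrib_right)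
    then show ?thesis
      by (simp only: sum.distrib)
  qed
  also have "(\<Sum>i\<le>K. if Poly_Mapping.lookup m j = i then c * monomial_eval ?m' x * x j ^ i else 0)
      = c * monomial_eval m x"
    using Cons.prems p by (simp add: sum.delta monomial_eval_update_0[of m x j] mult.assoc)
  finally show ?case
    using Cons by (simp add: p)
qed

lemma algebraic_on_var_if_dependent:
  assumes "Z \<noteq> {}" "alg_indep_on Z S" "\<not> alg_indep_on Z (insert j S)"
  shows "algebraic_on Z S (\<lambda>x. x j)"
proof -
  obtain F where F: "F \<in> poly_funs (insert j S)" "\<forall>x\<in>Z. F x = 0" "\<exists>x. F x \<noteq> 0"
    using assms(3) unfolding alg_indep_on_def by blast
  obtain L where L: "poly_list_vars L \<subseteq> insert j S" "F = poly_list_eval L"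
    using F(1) by (rule poly_funsE)
  have "finite ((\<lambda>(c, m). Poly_Mapping.lookup m j) ` set L)"
    by simp
  then obtain K where "\<forall>k\<in>(\<lambda>(c, m). Poly_Mapping.lookup m j) ` set L. k \<le> K"
    using finite_nat_set_iff_bounded_le by blast
  then have K: "\<forall>(c, m)\<in>set L. Poly_Mapping.lookup m j \<le> K"
    by auto
  define a where "a i = poly_list_eval (poly_list_coeff j i L)" for i
  have a: "a i \<in> poly_funs S" for i
    unfolding a_def using poly_list_vars_coeff[of j i L] L(1) by (intro poly_funsI) auto
  have F_eq: "F x = (\<Sum>i\<le>K. a i x * x j ^ i)" for x
    unfolding L(2) a_def by (rule poly_list_eval_expand_var[OF K])
  have "\<exists>i\<le>K. \<exists>x\<in>Z. a i x \<noteq> 0"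
  proof (rule ccontr)
    assume "\<not> ?thesis"
    then have "\<forall>i\<le>K. \<forall>x. a i x = 0"
      using assms(2) a unfolding alg_indep_on_def by blast
    then show False
      using F(3) unfolding F_eq by simp
  qed
  then show ?thesis
    unfolding algebraic_on_def using a F(2) F_eq by auto
qed

lemma algebraic_on_nonzero_constant_coeff:
  assumes irr: "proj_irreducible N Z" and alg: "algebraic_on Z S f" and f: "f \<in> poly_funs UNIV"
    and nonzero: "\<exists>x\<in>Z. f x \<noteq> 0"
  obtains k a where "\<forall>i\<le>k. a i \<in> poly_funs S" "\<exists>x\<in>Z. a 0 x \<noteq> 0"
    "\<forall>x\<in>Z. (\<Sum>i\<le>k. a i x * f x ^ i) = 0"
proof -
  obtain k a where a: "\<forall>i\<le>k. a i \<in> poly_funs S" "\<exists>i\<le>k. \<exists>x\<in>Z. a i x \<noteq> 0"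
      "\<forall>x\<in>Z. (\<Sum>i\<le>k. a i x * f x ^ i) = 0"
    using alg unfolding algebraic_on_def by blast
  let ?P = "{i. i \<le> k \<and> (\<exists>x\<in>Z. a i x \<noteq> 0)}"
  define i0 where "i0 = Min ?P"
  have "i0 \<in> ?P"
    unfolding i0_def by (rule Min_in) (use a(2) in auto)
  then have i0: "i0 \<le> k" "\<exists>x\<in>Z. a i0 x \<noteq> 0"
    by auto
  have below_i0: "a i x = 0" if "i < i0" "x \<in> Z" for i x
  proof (rule ccontr)
    assume "a i x \<noteq> 0"
    then have "i \<in> ?P"
      using that i0(1) by auto
    then have "i0 \<le> i"
      unfolding i0_def by (rule Min_le[rotated]) simp
    then show False
      using that(1) by simp
  qed
  define G where "G x = (\<Sum>i\<le>k - i0. a (i + i0) x * f x ^ i)" for x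
  have "f x ^ i0 * G x = 0" if x: "x \<in> Z" for x
  proof -
    have "f x ^ i0 * G x = (\<Sum>i\<in>{i0..k}. a i x * f x ^ i)"
      unfolding G_def sum_distrib_left
      by (rule sum.reindex_bij_witness[of _ "\<lambda>i. i - i0" "\<lambda>i. i + i0"])
        (use i0(1) in \<open>auto simp: power_add mult_ac\<close>)
    also have "\<dots> = (\<Sum>i\<le>k. a i x * f x ^ i)"
      by (rule sum.mono_neutral_left) (use below_i0 x in auto)
    finally show ?thesis
      using a(3) x by simp
  qed
  moreover have "G \<in> poly_funs UNIV"
    unfolding G_def using a(1) i0(1) poly_funs_mono[of S UNIV]
    by (intro poly_funs_sum poly_funs_mult poly_funs_power f) (auto simp: subset_iff)
  ultimately have "(\<forall>x\<in>Z. f x ^ i0 = 0) \<or> (\<forall>x\<in>Z. G x = 0)"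
    by (intro irreducible_no_zero_divisors[OF irr poly_funs_power[OF f]]) auto
  moreover have "\<not> (\<forall>x\<in>Z. f x ^ i0 = 0)"
    using nonzero by auto
  ultimately have "\<forall>x\<in>Z. G x = 0"
    by blast
  then show ?thesis
    using a(1) i0 by (intro that[of "k - i0" "\<lambda>i. a (i + i0)"]) (auto simp: G_def)
qed

lemma algebraic_on_vanishes_from_subset:
  assumes irr: "proj_irreducible N Z'" and sub: "Z \<subseteq> Z'" and indep: "alg_indep_on Z S"
    and f: "f \<in> poly_funs UNIV" and alg: "algebraic_on Z' S f" and vanish: "\<forall>x\<in>Z. f x = 0"
  shows "\<forall>x\<in>Z'. f x = 0"
proof (rule ccontr)
  assume "\<not> ?thesis"
  then obtain k a where a: "\<forall>i\<le>k. a i \<in> poly_funs S" "\<exists>x\<in>Z'. a 0 x \<noteq> 0"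
      "\<forall>x\<in>Z'. (\<Sum>i\<le>k. a i x * f x ^ i) = 0"
    using algebraic_on_nonzero_constant_coeff[OF irr alg f] by blast
  have "a 0 x = 0" if x: "x \<in> Z" for x
  proof -
    have "(\<Sum>i\<le>k. a i x * f x ^ i) = (\<Sum>i\<le>k. if i = 0 then a 0 x else 0)"
      by (rule sum.cong) (use vanish x in auto)
    then have "(\<Sum>i\<le>k. a i x * f x ^ i) = a 0 x"
      by simp
    then show ?thesis
      using a(3) sub x by auto
  qed
  then have "a 0 x = 0" for x
    using alg_indep_onD[OF indep, of "a 0"] a(1) by blast
  then show False
    using a(2) by blast
qed

lemma alg_indep_on_insert_if_strict_subset:
  assumes irr: "proj_irreducible N Z" and irr': "proj_irreducible N Z'" and sub: "Z \<subset> Z'"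
    and indep: "alg_indep_on Z S"
  shows "\<exists>j. j \<notin> S \<and> alg_indep_on Z' (insert j S)"
proof (rule ccontr)
  assume dep: "\<not> ?thesis"
  have Z': "Z' \<noteq> {}"
    using irr' unfolding proj_irreducible_def by blast
  have indep': "alg_indep_on Z' S"
    using alg_indep_on_mono[OF _ indep] sub by blast
  have vars: "algebraic_on Z' S (\<lambda>x. x j)" for j
  proof (cases "j \<in> S")
    case True
    then show ?thesis
      using algebraic_on_poly_funs[OF Z' poly_funs_var] by blast
  next
    case False
    then have "\<not> alg_indep_on Z' (insert j S)"
      using dep by blast
    then show ?thesis
      by (rule algebraic_on_var_if_dependent[OF Z' indep'])
  qed
  have "proj_closed N Z" "Z \<noteq> {}" "proj_closed N Z'"
    using irr irr' unfolding proj_irreducible_def by blast+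
  obtain x' where x': "x' \<in> Z'" "x' \<notin> Z"
    using sub by blast
  then have "x' \<in> proj_points N"
    using proj_closed_subset[OF \<open>proj_closed N Z'\<close>] by blast
  then obtain f where f: "\<forall>x\<in>Z. cpoly_eval f x = 0" "cpoly_eval f x' \<noteq> 0"
    using proj_closed_separating_equation[OF \<open>proj_closed N Z\<close> \<open>Z \<noteq> {}\<close> _ x'(2)] by blast
  obtain L where L: "cpoly_eval f = poly_list_eval L"
    using cpoly_eval_in_poly_funs[of f] by (auto elim: poly_funsE)
  have "\<forall>x\<in>Z'. cpoly_eval f x = 0"
  proof (rule algebraic_on_vanishes_from_subset[OF irr' _ indep cpoly_eval_in_poly_funs])
    show "algebraic_on Z' S (cpoly_eval f)"
      unfolding L by (rule algebraic_on_poly_list_eval[OF irr' vars])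
    show "Z \<subseteq> Z'" "\<forall>x\<in>Z. cpoly_eval f x = 0"
      using sub f(1) by auto
  qed
  then show False
    using x'(1) f(2) by blast
qed

lemma alg_indep_on_singleton:
  assumes cl: "proj_closed N Z" and x: "x \<in> Z" and v: "x v \<noteq> 0"
  shows "alg_indep_on Z {v}"
  unfolding alg_indep_on_def
proof (intro ballI impI)
  fix F assume F: "F \<in> poly_funs {v}" "\<forall>x\<in>Z. F x = 0"
  obtain L where L: "poly_list_vars L \<subseteq> {v}" "F = poly_list_eval L"
    using F(1) by (rule poly_funsE)
  define Q where "Q = (\<Sum>(c, m)\<leftarrow>L. monom c (Poly_Mapping.lookup m v))"
  have F_eq: "F y = poly Q (y v)" for y
    unfolding L(2) Q_def using L(1)
  proof (induction L)
    case (Cons p L)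
    then show ?case
      using monomial_eval_superset[of "{v}" "snd p" y] by (cases p) (simp add: poly_monom)
  qed simp
  have "Q = 0"
  proof (rule poly_eq_0_if_vanishes_off_0)
    fix s :: complex assume "s \<noteq> 0"
    then have "(\<lambda>w. s / x v * x w) \<in> Z"
      using v by (intro proj_closed_scale[OF cl x]) auto
    then show "poly Q s = 0"
      using F(2) F_eq[of "\<lambda>w. s / x v * x w"] v by simp
  qed
  then show "\<forall>y. F y = 0"
    by (simp add: F_eq)
qed

text \<open>One independent coordinate for the nonempty \<open>Z\<^sub>0\<close>, and one more for each strict inclusion
  \<open>Z\<^sub>i \<subset> Z\<^sub>i\<^sub>+\<^sub>1\<close>.\<close>

lemma has_irred_chain_alg_indep:
  assumes "has_irred_chain N X k"
  obtains S where "finite S" "card S = Suc k" "alg_indep_on X S"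
proof -
  obtain Z where irr: "\<forall>i\<le>k. proj_irreducible N (Z i) \<and> Z i \<subseteq> X" and chain: "\<forall>i<k. Z i \<subset> Z (Suc i)"
    using assms unfolding has_irred_chain_def by blast
  have "\<exists>S. finite S \<and> card S = Suc i \<and> alg_indep_on (Z i) S" if "i \<le> k" for i
    using that
  proof (induction i)
    case 0
    have cl: "proj_closed N (Z 0)" and "Z 0 \<noteq> {}"
      using irr unfolding proj_irreducible_def by auto
    then obtain x where x: "x \<in> Z 0"
      by blast
    then have "x \<in> proj_points N"
      using proj_closed_subset[OF cl] by blast
    then obtain v where "x v \<noteq> 0"
      unfolding proj_points_def by blast
    then show ?case
      using alg_indep_on_singleton[OF cl x] by (intro exI[of _ "{v}"]) auto
  next
    case (Suc i)
    then obtain S where S: "finite S" "card S = Suc i" "alg_indep_on (Z i) S"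
      by auto
    have "proj_irreducible N (Z i)" "proj_irreducible N (Z (Suc i))" "Z i \<subset> Z (Suc i)"
      using irr chain Suc.prems by auto
    then obtain j where "j \<notin> S" "alg_indep_on (Z (Suc i)) (insert j S)"
      using alg_indep_on_insert_if_strict_subset S(3) by blast
    then show ?case
      using S by (intro exI[of _ "insert j S"]) auto
  qed
  then obtain S where S: "finite S" "card S = Suc k" "alg_indep_on (Z k) S"
    by blast
  moreover have "Z k \<subseteq> X"
    using irr by blast
  ultimately show ?thesis
    using that alg_indep_on_mono by blast
qed

section \<open>Irreducibility of closures of images\<close>

text \<open>Irreducibility of a closure can be tested on the set itself.\<close>

lemma irreducible_zariski_closure:
  assumes Y: "Y \<subseteq> proj_points N" "Y \<noteq> {}"
    and meet: "\<And>f g y1 y2. y1 \<in> Y \<Longrightarrow> y2 \<in> Y \<Longrightarrow> cpoly_eval f y1 \<noteq> 0 \<Longrightarrow> cpoly_eval g y2 \<noteq> 0 \<Longrightarrow>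
      cpoly_eval f (\<lambda>v. 0) = 0 \<Longrightarrow> cpoly_eval g (\<lambda>v. 0) = 0 \<Longrightarrow>
      \<exists>y\<in>Y. cpoly_eval f y \<noteq> 0 \<and> cpoly_eval g y \<noteq> 0"
  shows "proj_irreducible N (zariski_closure N Y)"
proof -
  let ?C = "zariski_closure N Y"
  have Y_C: "Y \<subseteq> ?C"
    by (rule zariski_closure_upper[OF Y(1)])
  have not_in_proper: "\<exists>y\<in>Y. y \<notin> A" if A: "proj_closed N A" and "?C \<noteq> A" "A \<subseteq> ?C" for A
  proof (rule ccontr)
    assume "\<not> ?thesis"
    then have "?C \<subseteq> A"
      using zariski_closure_minimal[OF A, of Y] by blast
    then show False
      using that(2,3) by blast
  qed
  have "?C = A \<or> ?C = B" if A: "proj_closed N A" and B: "proj_closed N B" and C: "?C = A \<union> B" for A B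
  proof (rule ccontr)
    assume proper: "\<not> ?thesis"
    then have "A \<noteq> {}" "B \<noteq> {}"
      using C by auto
    obtain y1 y2 where y: "y1 \<in> Y" "y1 \<notin> A" "y2 \<in> Y" "y2 \<notin> B"
      using not_in_proper[OF A] not_in_proper[OF B] proper C by blast
    obtain fA where fA: "\<forall>x\<in>A. cpoly_eval fA x = 0" "cpoly_eval fA y1 \<noteq> 0" "cpoly_eval fA (\<lambda>v. 0) = 0"
      using proj_closed_separating_equation[OF A \<open>A \<noteq> {}\<close> _ y(2)] y(1) Y(1) by blast
    obtain fB where fB: "\<forall>x\<in>B. cpoly_eval fB x = 0" "cpoly_eval fB y2 \<noteq> 0" "cpoly_eval fB (\<lambda>v. 0) = 0"
      using proj_closed_separating_equation[OF B \<open>B \<noteq> {}\<close> _ y(4)] y(3) Y(1) by blast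
    obtain y where "y \<in> Y" "cpoly_eval fA y \<noteq> 0" "cpoly_eval fB y \<noteq> 0"
      using meet[OF y(1,3) fA(2) fB(2) fA(3) fB(3)] by blast
    then show False
      using Y_C C fA(1) fB(1) by blast
  qed
  moreover have "proj_closed N ?C"
    by (rule zariski_closure_closed[OF Y(1)])
  moreover have "?C \<noteq> {}"
    using Y(2) Y_C by blast
  ultimately show ?thesis
    unfolding proj_irreducible_def by blast
qed

definition is_poly_fun :: "(complex \<Rightarrow> complex) \<Rightarrow> bool" where
  "is_poly_fun h \<longleftrightarrow> (\<exists>p. \<forall>t. h t = poly p t)"

lemma is_poly_fun_const: "is_poly_fun (\<lambda>t. c)"
  unfolding is_poly_fun_def by (rule exI[of _ "[:c:]"]) simp

lemma is_poly_fun_affine: "is_poly_fun (\<lambda>t. a + t * b)"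
  unfolding is_poly_fun_def by (rule exI[of _ "[:a, b:]"]) (simp add: mult.commute)

lemma is_poly_fun_add: "is_poly_fun f \<Longrightarrow> is_poly_fun g \<Longrightarrow> is_poly_fun (\<lambda>t. f t + g t)"
  unfolding is_poly_fun_def by (metis poly_add)

lemma is_poly_fun_mult: "is_poly_fun f \<Longrightarrow> is_poly_fun g \<Longrightarrow> is_poly_fun (\<lambda>t. f t * g t)"
  unfolding is_poly_fun_def by (metis poly_mult)

lemma is_poly_fun_power: "is_poly_fun f \<Longrightarrow> is_poly_fun (\<lambda>t. f t ^ k)"
  by (induction k) (auto intro: is_poly_fun_mult is_poly_fun_const[of 1, simplified])

lemma is_poly_fun_sum:
  "finite I \<Longrightarrow> (\<And>i. i \<in> I \<Longrightarrow> is_poly_fun (f i)) \<Longrightarrow> is_poly_fun (\<lambda>t. \<Sum>i\<in>I. f i t)"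
  by (induction I rule: finite_induct) (auto intro: is_poly_fun_add is_poly_fun_const[of 0, simplified])

lemma is_poly_fun_prod:
  "finite I \<Longrightarrow> (\<And>i. i \<in> I \<Longrightarrow> is_poly_fun (f i)) \<Longrightarrow> is_poly_fun (\<lambda>t. \<Prod>i\<in>I. f i t)"
  by (induction I rule: finite_induct) (auto intro: is_poly_fun_mult is_poly_fun_const[of 1, simplified])

lemma is_poly_fun_cpoly_eval:
  "(\<And>v. is_poly_fun (\<lambda>t. y t v)) \<Longrightarrow> is_poly_fun (\<lambda>t. cpoly_eval f (y t))"
  unfolding cpoly_eval_def
  by (intro is_poly_fun_sum is_poly_fun_mult is_poly_fun_const is_poly_fun_prod is_poly_fun_power finite_keys)

text \<open>If any two parameters are joined by a line \<open>t \<mapsto> lin \<mu>\<^sub>1 \<mu>\<^sub>2 t\<close> inside \<open>F\<close> along which \<open>\<phi>\<close> is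
  polynomial, then two equations not vanishing on the image have a product that is a nonzero
  polynomial along the line, hence a common non-zero.\<close>

lemma irreducible_closure_of_image:
  fixes \<phi> :: "'p \<Rightarrow> ('v \<Rightarrow> complex)"
  assumes ne: "\<phi> ` F \<inter> proj_points N \<noteq> {}"
    and supp: "\<And>\<mu> v. v \<notin> N \<Longrightarrow> \<phi> \<mu> v = 0"
    and line: "\<And>\<mu>1 \<mu>2 t. \<mu>1 \<in> F \<Longrightarrow> \<mu>2 \<in> F \<Longrightarrow> lin \<mu>1 \<mu>2 t \<in> F"
    and line_0: "\<And>\<mu>1 \<mu>2. lin \<mu>1 \<mu>2 0 = \<mu>1" and line_1: "\<And>\<mu>1 \<mu>2. lin \<mu>1 \<mu>2 1 = \<mu>2"
    and line_poly: "\<And>\<mu>1 \<mu>2 v. is_poly_fun (\<lambda>t. \<phi> (lin \<mu>1 \<mu>2 t) v)"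
  shows "proj_irreducible N (zariski_closure N (\<phi> ` F \<inter> proj_points N))"
proof (rule irreducible_zariski_closure[OF _ ne])
  fix f g y1 y2
  assume y: "y1 \<in> \<phi> ` F \<inter> proj_points N" "y2 \<in> \<phi> ` F \<inter> proj_points N"
    and nonzero: "cpoly_eval f y1 \<noteq> 0" "cpoly_eval g y2 \<noteq> 0" and at_0: "cpoly_eval f (\<lambda>v. 0) = 0"
  obtain \<mu>1 \<mu>2 where \<mu>: "\<mu>1 \<in> F" "y1 = \<phi> \<mu>1" "\<mu>2 \<in> F" "y2 = \<phi> \<mu>2"
    using y by blast
  define y where "y t = \<phi> (lin \<mu>1 \<mu>2 t)" for t
  have "is_poly_fun (\<lambda>t. cpoly_eval f (y t))" "is_poly_fun (\<lambda>t. cpoly_eval g (y t))"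
    unfolding y_def by (rule is_poly_fun_cpoly_eval[OF line_poly])+
  then obtain p q where p: "\<And>t. cpoly_eval f (y t) = poly p t" and q: "\<And>t. cpoly_eval g (y t) = poly q t"
    unfolding is_poly_fun_def by blast
  have "p \<noteq> 0" "q \<noteq> 0"
    using p[of 0] q[of 1] nonzero \<mu> by (auto simp: y_def line_0 line_1)
  then obtain t where "poly (p * q) t \<noteq> 0"
    using poly_all_0_iff_0[of "p * q"] by auto
  then have t: "cpoly_eval f (y t) \<noteq> 0" "cpoly_eval g (y t) \<noteq> 0"
    by (auto simp: p q)
  then have "y t \<noteq> (\<lambda>v. 0)"
    using at_0 by auto
  then have "y t \<in> proj_points N"
    using supp unfolding proj_points_def y_def by auto
  then have "y t \<in> \<phi> ` F \<inter> proj_points N"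
    using line[OF \<mu>(1,3)] unfolding y_def by blast
  with t show "\<exists>y\<in>\<phi> ` F \<inter> proj_points N. cpoly_eval f y \<noteq> 0 \<and> cpoly_eval g y \<noteq> 0"
    by blast
qed blast

definition pad :: "nat \<Rightarrow> nat list \<Rightarrow> nat list" where
  "pad n lam = lam @ replicate (n - length lam) 0"

lemma length_pad: "length lam \<le> n \<Longrightarrow> length (pad n lam) = n"
  unfolding pad_def by simp

lemma filter_nonzero_pad:
  assumes "is_partition lam"
  shows "filter (\<lambda>i. i \<noteq> 0) (pad n lam) = lam"
  using assms unfolding is_partition_def pad_def by (auto simp: filter_id_conv)

lemma index_set_iff:
  assumes part: "is_partition lam" and len: "length lam \<le> n"
  shows "is \<in> index_set n lam \<longleftrightarrow> length is = n \<and> mset is = mset (pad n lam)"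
proof
  assume "is \<in> index_set n lam"
  then have L: "length is = n" and M: "mset (filter (\<lambda>i. i \<noteq> 0) is) = mset lam"
    unfolding index_set_def by auto
  have "mset is = {#x \<in># mset is. x \<noteq> 0#} + {#x \<in># mset is. x = 0#}"
    using multiset_partition[of "mset is" "\<lambda>x. x \<noteq> 0"] by simp
  also have "\<dots> = mset lam + replicate_mset (count (mset is) 0) 0"
    using M by (simp add: filter_eq_replicate_mset)
  finally have E: "mset is = mset lam + replicate_mset (count (mset is) 0) 0" .
  then have "size (mset is) = size (mset lam) + count (mset is) 0"
    by (metis size_replicate_mset size_union)
  then have "count (mset is) 0 = n - length lam"
    using L by simp
  then show "length is = n \<and> mset is = mset (pad n lam)"
    using E L unfolding pad_def by simp
next
  assume A: "length is = n \<and> mset is = mset (pad n lam)"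
  then have "mset (filter (\<lambda>i. i \<noteq> 0) is) = mset (filter (\<lambda>i. i \<noteq> 0) (pad n lam))"
    by simp
  also have "\<dots> = mset lam"
    using filter_nonzero_pad[OF part] by simp
  finally show "is \<in> index_set n lam"
    using A unfolding index_set_def by simp
qed

lemma pad_in_index_set: "is_partition lam \<Longrightarrow> length lam \<le> n \<Longrightarrow> pad n lam \<in> index_set n lam"
  using index_set_iff length_pad by blast

lemma set_index_set:
  assumes "is_partition lam" "length lam \<le> n" "is \<in> index_set n lam"
  shows "set is = set (pad n lam)"
  using index_set_iff[OF assms(1,2)] assms(3) by (metis mset_eq_setD)

lemma length_index_set: "is \<in> index_set n lam \<Longrightarrow> length is = n"
  unfolding index_set_def by simp

lemma nth_index_set_in_pad:
  assumes "is_partition lam" "length lam \<le> n" "is \<in> index_set n lam" "k < n"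
  shows "is ! k \<in> set (pad n lam)"
  using assms nth_mem[of k "is"] by (simp add: length_index_set set_index_set)

lemma pad_base_value:
  assumes "s + 1 = card (set (pad n lam))"
  obtains w where "w \<in> set (pad n lam)" "card (set (pad n lam) - {w}) = s" "0 \<notin> set (pad n lam) - {w}"
proof -
  have ne: "pad n lam \<noteq> []"
    using assms by auto
  define w where "w = (if 0 \<in> set (pad n lam) then 0 else hd (pad n lam))"
  have "w \<in> set (pad n lam)"
    using ne unfolding w_def by auto
  moreover have "0 \<notin> set (pad n lam) - {w}"
    unfolding w_def by auto
  ultimately show ?thesis
    using that assms by simp
qed

lemma sum_indicator_nth_eq_count:
  "(\<Sum>k<length xs. if xs ! k = w then 1 else 0) = (of_nat (count (mset xs) w) :: 'a::semiring_1)"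
  by (induction xs) (simp_all add: sum.lessThan_Suc_shift del: sum.lessThan_Suc)

lemma index_set_swap_pair:
  assumes part: "is_partition lam" and len: "length lam \<le> n"
    and x: "x \<in> set (pad n lam)" and y: "y \<in> set (pad n lam)" and xy: "x \<noteq> y"
    and k0: "0 < k0" "k0 < n"
  obtains a b where "a \<in> index_set n lam" "b \<in> index_set n lam"
    "a ! 0 = x" "a ! k0 = y" "b ! 0 = y" "b ! k0 = x" "\<And>k. k \<noteq> 0 \<Longrightarrow> k \<noteq> k0 \<Longrightarrow> a ! k = b ! k"
proof -
  let ?P = "pad n lam"
  define R where "R = remove1 x (remove1 y ?P)"
  have x_R: "x \<in> set (remove1 y ?P)"
    using x xy by (simp add: in_set_remove1)
  have len_R: "length R = n - 2"
    unfolding R_def using x_R y length_pad[OF len] by (simp add: length_remove1)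
  have mset_R: "add_mset u (add_mset v (mset R)) = mset ?P" if "{u, v} = {x, y}" for u v
  proof -
    have "add_mset x (mset R) = mset (remove1 y ?P)"
      unfolding R_def mset_remove1[of x] using x_R by (simp only: set_mset_mset insert_DiffM)
    then have "add_mset x (add_mset y (mset R)) = mset ?P"
      using y by (simp add: insert_DiffM add_mset_commute[of x y])
    then show ?thesis
      using that by (auto simp: doubleton_eq_iff add_mset_commute)
  qed
  define mk where "mk u v = u # (take (k0 - 1) R @ v # drop (k0 - 1) R)" for u v :: nat
  obtain k' where k': "k0 = Suc k'"
    using k0 by (cases k0) auto
  have len_take: "length (take (k0 - 1) R) = k'"
    using k' k0 len_R by simp
  have "mset (take (k0 - 1) R) + mset (drop (k0 - 1) R) = mset R"
    by (metis append_take_drop_id mset_append)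
  then have mk: "mset (mk u v) = add_mset u (add_mset v (mset R))" "length (mk u v) = n"
    "mk u v ! 0 = u" "mk u v ! k0 = v" for u v
    unfolding mk_def using k0 len_R len_take k' by (auto simp: nth_append add_mset_commute)
  show ?thesis
  proof (rule that[of "mk x y" "mk y x"])
    show "mk x y \<in> index_set n lam" "mk y x \<in> index_set n lam"
      using mk(1,2) mset_R[of x y] mset_R[of y x] unfolding index_set_iff[OF part len]
      by (simp_all add: insert_commute)
    show "mk x y ! k = mk y x ! k" if k: "k \<noteq> 0" "k \<noteq> k0" for k
    proof -
      obtain j where j: "k = Suc j" "j \<noteq> k'"
        using k k' by (cases k) auto
      then show ?thesis
        using len_take unfolding mk_def by (simp add: nth_append)
    qed
  qed (use mk(3,4) in auto)
qed

section \<open>Lower bound: a chain of irreducible subvarieties\<close>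

lemma moment_point_in_index_set:
  "is \<in> index_set n lam \<Longrightarrow>
    moment_point n lam mu is = (\<Prod>k<n. if is ! k = 0 then 1 else mu k (is ! k))"
  unfolding moment_point_def by simp

lemma moment_point_notin_index_set: "is \<notin> index_set n lam \<Longrightarrow> moment_point n lam mu is = 0"
  unfolding moment_point_def by simp

definition moment_image :: "nat \<Rightarrow> nat list \<Rightarrow> (nat \<times> nat) set \<Rightarrow> (nat list \<Rightarrow> complex) set" where
  "moment_image n lam Q = moment_point n lam ` {mu. \<forall>k w. (k, w) \<notin> Q \<longrightarrow> mu k w = 1}
    \<inter> proj_points (index_set n lam)"

lemma moment_variety_eq_closure_image:
  "moment_variety n lam = zariski_closure (index_set n lam) (moment_image n lam UNIV)"
  unfolding moment_variety_def moment_image_def by (simp add: full_SetCompr_eq)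

lemma moment_image_mono: "Q \<subseteq> Q' \<Longrightarrow> moment_image n lam Q \<subseteq> moment_image n lam Q'"
  unfolding moment_image_def by blast

lemma irreducible_closure_moment_image:
  assumes part: "is_partition lam" and len: "length lam \<le> n"
  shows "proj_irreducible (index_set n lam) (zariski_closure (index_set n lam) (moment_image n lam Q))"
  unfolding moment_image_def
proof (rule irreducible_closure_of_image[where lin = "\<lambda>\<mu>1 \<mu>2 t k w. \<mu>1 k w + t * (\<mu>2 k w - \<mu>1 k w)"])
  let ?one = "\<lambda>k w. 1 :: complex"
  have "moment_point n lam ?one (pad n lam) = 1"
    using pad_in_index_set[OF part len] by (simp add: moment_point_in_index_set)
  then have "\<exists>v. moment_point n lam ?one v \<noteq> 0"
    by (intro exI[of _ "pad n lam"]) simp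
  then have "moment_point n lam ?one \<in> proj_points (index_set n lam)"
    unfolding proj_points_def by (simp add: moment_point_notin_index_set)
  then have "moment_point n lam ?one
      \<in> moment_point n lam ` {mu. \<forall>k w. (k, w) \<notin> Q \<longrightarrow> mu k w = 1} \<inter> proj_points (index_set n lam)"
    by (intro IntI imageI) simp_all
  then show "moment_point n lam ` {mu. \<forall>k w. (k, w) \<notin> Q \<longrightarrow> mu k w = 1} \<inter> proj_points (index_set n lam) \<noteq> {}"
    by blast
  show "is_poly_fun (\<lambda>t. moment_point n lam (\<lambda>k w. \<mu>1 k w + t * (\<mu>2 k w - \<mu>1 k w)) v)" for \<mu>1 \<mu>2 v
  proof (cases "v \<in> index_set n lam")
    case True
    have "is_poly_fun (\<lambda>t. if v ! k = 0 then 1 else \<mu>1 k (v ! k) + t * (\<mu>2 k (v ! k) - \<mu>1 k (v ! k)))" for k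
      by (cases "v ! k = 0") (simp_all add: is_poly_fun_const is_poly_fun_affine)
    then show ?thesis
      using True by (simp add: moment_point_in_index_set is_poly_fun_prod)
  next
    case False
    then show ?thesis
      by (simp add: moment_point_notin_index_set is_poly_fun_const)
  qed
qed (simp_all add: moment_point_notin_index_set)

lemma moment_image_swap_eq:
  assumes ab: "a \<in> index_set n lam" "b \<in> index_set n lam" "a ! 0 = wb" "a ! k0 = w0"
    "b ! 0 = w0" "b ! k0 = wb" "\<And>k. k \<noteq> 0 \<Longrightarrow> k \<noteq> k0 \<Longrightarrow> a ! k = b ! k"
    and Q: "(0, w0) \<notin> Q" "(0, wb) \<notin> Q" "(k0, w0) \<notin> Q" "(k0, wb) \<notin> Q"
    and y: "y \<in> moment_image n lam Q"
  shows "y a = y b"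
proof -
  obtain mu where mu: "\<forall>k w. (k, w) \<notin> Q \<longrightarrow> mu k w = 1" "y = moment_point n lam mu"
    using y unfolding moment_image_def by blast
  have "(if a ! k = 0 then 1 else mu k (a ! k)) = (if b ! k = 0 then 1 else mu k (b ! k))" for k
    using ab(3-7) mu(1) Q by (cases "k = 0 \<or> k = k0") auto
  then show ?thesis
    using mu(2) ab(1,2) by (simp add: moment_point_in_index_set)
qed

lemma moment_image_swap_witness:
  assumes ab: "a \<in> index_set n lam" "b \<in> index_set n lam" "a ! k0 = w0" "b ! k0 \<noteq> w0"
    and k0: "k0 < n" and w0: "w0 \<noteq> 0"
  obtains y where "y \<in> moment_image n lam {(k0, w0)}" "y a \<noteq> y b"
proof -
  define mu where "mu = (\<lambda>k w. if k = k0 \<and> w = w0 then (2::complex) else 1)"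
  have "moment_point n lam mu a = (\<Prod>k<n. if k = k0 then 2 else 1)"
    unfolding moment_point_in_index_set[OF ab(1)] using ab(3) w0 by (intro prod.cong) (auto simp: mu_def)
  then have a: "moment_point n lam mu a = 2"
    using k0 by simp
  have b: "moment_point n lam mu b = 1"
    unfolding moment_point_in_index_set[OF ab(2)] using ab(4) by (intro prod.neutral) (auto simp: mu_def)
  then have "moment_point n lam mu \<in> proj_points (index_set n lam)"
    unfolding proj_points_def by (auto simp: moment_point_notin_index_set intro!: exI[of _ b])
  then have "moment_point n lam mu \<in> moment_image n lam {(k0, w0)}"
    unfolding moment_image_def by (intro IntI imageI) (simp_all add: mu_def)
  then show ?thesis
    using that a b by simp
qed

text \<open>While \<open>\<mu>\<^sub>k\<^sub>0\<^sub>w\<^sub>0\<close> is fixed to \<open>1\<close>, the two coordinates obtained by swapping \<open>w\<^sub>0\<close> and \<open>wb\<close>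
  between positions \<open>0\<close> and \<open>k\<^sub>0\<close> agree; freeing it separates them.\<close>

lemma closure_moment_image_strict_mono:
  assumes part: "is_partition lam" and len: "length lam \<le> n"
    and w: "wb \<in> set (pad n lam)" "w0 \<in> set (pad n lam)" "w0 \<noteq> wb" "w0 \<noteq> 0"
    and k0: "0 < k0" "k0 < n"
    and Q: "(0, w0) \<notin> Q" "(0, wb) \<notin> Q" "(k0, w0) \<notin> Q" "(k0, wb) \<notin> Q"
  shows "zariski_closure (index_set n lam) (moment_image n lam Q)
    \<subset> zariski_closure (index_set n lam) (moment_image n lam (insert (k0, w0) Q))"
proof -
  obtain a b where ab: "a \<in> index_set n lam" "b \<in> index_set n lam" "a ! 0 = wb" "a ! k0 = w0"
    "b ! 0 = w0" "b ! k0 = wb" "\<And>k. k \<noteq> 0 \<Longrightarrow> k \<noteq> k0 \<Longrightarrow> a ! k = b ! k"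
    using index_set_swap_pair[OF part len w(1,2) w(3)[symmetric] k0] by blast
  obtain y where y: "y \<in> moment_image n lam {(k0, w0)}" "y a \<noteq> y b"
    using moment_image_swap_witness[OF ab(1,2,4)] ab(6) w(3,4) k0(2) by metis
  define L where "L = [(1::complex, Poly_Mapping.single a (1::nat)), (-1, Poly_Mapping.single b 1)]"
  have L_eval: "cpoly_eval (cpoly_of_list L) x = x a - x b" for x
    unfolding L_def cpoly_eval_cpoly_of_list by simp
  show ?thesis
  proof (rule zariski_closure_strict_mono)
    show "homogeneous (cpoly_of_list L)"
      by (rule homogeneous_cpoly_of_list[of _ 1]) (simp add: L_def mono_deg_def)
    show "\<forall>x\<in>moment_image n lam Q. cpoly_eval (cpoly_of_list L) x = 0"
      using moment_image_swap_eq[OF ab Q] by (simp add: L_eval)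
    show "y \<in> moment_image n lam (insert (k0, w0) Q)"
      using moment_image_mono[of "{(k0, w0)}" "insert (k0, w0) Q"] y(1) by blast
    show "cpoly_eval (cpoly_of_list L) y \<noteq> 0"
      using y(2) by (simp add: L_eval)
  qed (auto simp: moment_image_def intro: moment_image_mono[THEN subsetD])
qed

lemma set_take_Suc_distinct:
  assumes "distinct xs" "j < length xs"
  shows "set (take (Suc j) xs) = insert (xs ! j) (set (take j xs))" "xs ! j \<notin> set (take j xs)"
proof -
  show "set (take (Suc j) xs) = insert (xs ! j) (set (take j xs))"
    using assms(2) by (simp add: take_Suc_conv_app_nth)
  have "xs ! j \<in> set (drop j xs)"
    using Cons_nth_drop_Suc[OF assms(2)] by (metis list.set_intros(1))
  then show "xs ! j \<notin> set (take j xs)"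
    using set_take_disj_set_drop_if_distinct[OF assms(1) order_refl] by blast
qed

lemma closure_moment_image_take_strict_mono:
  assumes part: "is_partition lam" and len: "length lam \<le> n"
    and wb: "wb \<in> set (pad n lam)" "0 \<notin> set (pad n lam) - {wb}"
    and ps: "distinct ps" "set ps = {1..<n} \<times> (set (pad n lam) - {wb})" and j: "j < length ps"
  shows "zariski_closure (index_set n lam) (moment_image n lam (set (take j ps)))
    \<subset> zariski_closure (index_set n lam) (moment_image n lam (set (take (Suc j) ps)))"
proof -
  obtain k0 w0 where kw: "ps ! j = (k0, w0)"
    by force
  have "(k0, w0) \<in> {1..<n} \<times> (set (pad n lam) - {wb})"
    using nth_mem[OF j] ps(2) kw by simp
  then have k0: "0 < k0" "k0 < n" and w0_W: "w0 \<in> set (pad n lam) - {wb}"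
    by auto
  then have w0: "w0 \<in> set (pad n lam)" "w0 \<noteq> wb" "w0 \<noteq> 0"
    using wb(2) by (blast, blast, metis)
  have "(k0, w0) \<notin> set (take j ps)" "set (take j ps) \<subseteq> {1..<n} \<times> (set (pad n lam) - {wb})"
    using set_take_Suc_distinct(2)[OF ps(1) j] kw set_take_subset[of j ps] ps(2) by auto
  then show ?thesis
    unfolding set_take_Suc_distinct(1)[OF ps(1) j] kw
    by (intro closure_moment_image_strict_mono[OF part len wb(1) w0 k0]) auto
qed

lemma moment_variety_irred_chain:
  assumes part: "is_partition lam" and len: "length lam \<le> n"
    and card: "s + 1 = card (set (pad n lam))"
  shows "has_irred_chain (index_set n lam) (moment_variety n lam) ((n - 1) * s)"
proof -
  obtain wb where wb: "wb \<in> set (pad n lam)" "card (set (pad n lam) - {wb}) = s"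
    "0 \<notin> set (pad n lam) - {wb}"
    using pad_base_value[OF card] by blast
  obtain ps where ps: "distinct ps" "set ps = {1..<n} \<times> (set (pad n lam) - {wb})"
    using finite_distinct_list[of "{1..<n} \<times> (set (pad n lam) - {wb})"] by blast
  have len_ps: "length ps = (n - 1) * s"
    using distinct_card[OF ps(1)] wb(2) unfolding ps(2) by (simp add: card_cartesian_product)
  define Z where "Z j = zariski_closure (index_set n lam) (moment_image n lam (set (take j ps)))" for j
  have "Z j \<subset> Z (Suc j)" if "j < (n - 1) * s" for j
    unfolding Z_def using that len_ps by (intro closure_moment_image_take_strict_mono[OF part len wb(1,3) ps]) simp
  moreover have "Z j \<subseteq> moment_variety n lam" for j
    unfolding Z_def moment_variety_eq_closure_image by (intro zariski_closure_mono moment_image_mono) simp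
  moreover have "proj_irreducible (index_set n lam) (Z j)" for j
    unfolding Z_def by (rule irreducible_closure_moment_image[OF part len])
  ultimately show ?thesis
    unfolding has_irred_chain_def by (intro exI[of _ Z] conjI allI impI) simp_all
qed

section \<open>Upper bound: binomial relations among the coordinates\<close>

lemma alg_indep_on_subset_support:
  assumes "X \<subseteq> proj_points N" "alg_indep_on X S"
  shows "S \<subseteq> N"
proof
  fix j assume j: "j \<in> S"
  show "j \<in> N"
  proof (rule ccontr)
    assume "j \<notin> N"
    then have "\<forall>x\<in>X. x j = 0"
      using assms(1) unfolding proj_points_def by blast
    then have "\<forall>x. x j = (0 :: complex)"
      using bspec[OF assms(2)[unfolded alg_indep_on_def] poly_funs_var[OF j]] by simp
    then have "(\<lambda>_. 1 :: complex) j = 0"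
      by (rule spec)
    then show False
      by simp
  qed
qed

lemma sum_index_set_by_value:
  assumes "is_partition lam" "length lam \<le> n" "finite S" "S \<subseteq> index_set n lam" "k < n"
  shows "(\<Sum>w\<in>set (pad n lam). \<Sum>i\<in>{i\<in>S. i ! k = w}. e i) = (\<Sum>i\<in>S. e i)"
  using assms nth_index_set_in_pad by (intro sum.group finite_set) auto

lemma sum_index_set_by_position:
  fixes e :: "nat list \<Rightarrow> 'a::comm_ring_1"
  assumes part: "is_partition lam" and len: "length lam \<le> n" and S: "finite S" "S \<subseteq> index_set n lam"
  shows "(\<Sum>k<n. \<Sum>i\<in>{i\<in>S. i ! k = w}. e i) = of_nat (count (mset (pad n lam)) w) * (\<Sum>i\<in>S. e i)"
proof -
  have "(\<Sum>k<n. \<Sum>i\<in>{i\<in>S. i ! k = w}. e i) = (\<Sum>k<n. \<Sum>i\<in>S. e i * (if i ! k = w then 1 else 0))"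
    using S(1) by (simp add: sum.inter_filter if_distrib[of "\<lambda>x. _ * x"] cong: if_cong)
  also have "\<dots> = (\<Sum>i\<in>S. e i * (\<Sum>k<n. if i ! k = w then 1 else 0))"
    by (subst sum.swap) (simp add: sum_distrib_left)
  also have "\<dots> = (\<Sum>i\<in>S. e i * of_nat (count (mset (pad n lam)) w))"
  proof (rule sum.cong[OF refl])
    fix i assume "i \<in> S"
    then have "length i = n" "mset i = mset (pad n lam)"
      using S(2) index_set_iff[OF part len] by blast+
    then show "e i * (\<Sum>k<n. if i ! k = w then 1 else 0) = e i * of_nat (count (mset (pad n lam)) w)"
      using sum_indicator_nth_eq_count[of i w, where 'a = 'a] by simp
  qed
  finally show ?thesis
    by (simp add: sum_distrib_right mult.commute)
qed

text \<open>Balance at \<open>wb\<close> follows since every index vector has exactly one value at position \<open>k\<close>,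
  and balance at position \<open>0\<close> since every index vector contains each value equally often.\<close>

lemma index_set_relation_balanced:
  assumes part: "is_partition lam" and len: "length lam \<le> n"
    and S: "finite S" "S \<subseteq> index_set n lam" and wb: "wb \<in> set (pad n lam)"
    and total: "(\<Sum>i\<in>S. e i) = 0"
    and balanced: "\<And>k w. 0 < k \<Longrightarrow> k < n \<Longrightarrow> w \<in> set (pad n lam) - {wb} \<Longrightarrow>
      (\<Sum>i\<in>{i\<in>S. i ! k = w}. e i) = (0 :: int)"
    and k: "k < n"
  shows "(\<Sum>i\<in>{i\<in>S. i ! k = w}. e i) = 0"
proof -
  let ?e = "\<lambda>k w. \<Sum>i\<in>{i\<in>S. i ! k = w}. e i"
  have outside: "?e k w = 0" if "w \<notin> set (pad n lam)" "k < n" for k w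
    using that S(2) nth_index_set_in_pad[OF part len] by (intro sum.neutral) auto
  have positive: "?e k w = 0" if "0 < k" "k < n" for k w
  proof -
    have "?e k wb + (\<Sum>w\<in>set (pad n lam) - {wb}. ?e k w) = 0"
      using sum_index_set_by_value[OF part len S that(2), of e] total wb by (simp add: sum.remove)
    then have "?e k wb = 0"
      using balanced that by simp
    then show ?thesis
      using balanced[OF that] outside[OF _ that(2)] by (cases "w = wb \<or> w \<notin> set (pad n lam)") auto
  qed
  have "?e 0 w + (\<Sum>k\<in>{1..<n}. ?e k w) = (\<Sum>k<n. ?e k w)"
    using sum.remove[of "{..<n}" 0 "\<lambda>k. ?e k w"] k by (simp add: atLeast1_lessThan_eq_remove0)
  also have "\<dots> = 0"
    using sum_index_set_by_position[OF part len S, where w = w and e = e] total by simp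
  finally show ?thesis
    using k positive by (cases "k = 0") auto
qed

lemma index_set_integer_relation:
  assumes part: "is_partition lam" and len: "length lam \<le> n"
    and card: "s + 1 = card (set (pad n lam))"
    and S: "finite S" "S \<subseteq> index_set n lam" "card S = Suc (Suc ((n - 1) * s))"
  obtains e :: "nat list \<Rightarrow> int" where "\<exists>i\<in>S. e i \<noteq> 0" "(\<Sum>i\<in>S. e i) = 0"
    "\<And>k w. k < n \<Longrightarrow> (\<Sum>i\<in>{i\<in>S. i ! k = w}. e i) = 0"
proof -
  obtain wb where wb: "wb \<in> set (pad n lam)" "card (set (pad n lam) - {wb}) = s"
    using pad_base_value[OF card] by blast
  define J where "J = insert None (Some ` ({1..<n} \<times> (set (pad n lam) - {wb})))"
  define v where "v i j = (case j of None \<Rightarrow> (1 :: int) | Some (k, w) \<Rightarrow> if i ! k = w then 1 else 0)"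
    for i :: "nat list" and j :: "(nat \<times> nat) option"
  have "card J = Suc ((n - 1) * s)"
    unfolding J_def using wb(2) by (simp add: card_image card_cartesian_product)
  then have "\<exists>e. (\<forall>i\<in>S. e i \<in> (UNIV :: int set)) \<and> (\<exists>i\<in>S. e i \<noteq> 0) \<and> (\<forall>j\<in>J. (\<Sum>i\<in>S. e i * v i j) = 0)"
    using S by (intro subring_linear_system_nontrivial_solution[where u = 1]) (auto simp: J_def)
  then obtain e where e: "\<exists>i\<in>S. e i \<noteq> 0" "\<forall>j\<in>J. (\<Sum>i\<in>S. e i * v i j) = 0"
    by blast
  have total: "(\<Sum>i\<in>S. e i) = 0"
    using e(2) unfolding J_def v_def by auto
  have "(\<Sum>i\<in>{i\<in>S. i ! k = w}. e i) = 0" if "0 < k" "k < n" "w \<in> set (pad n lam) - {wb}" for k w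
    using e(2) that S(1) unfolding J_def v_def
    by (auto simp: sum.inter_filter if_distrib[of "\<lambda>x. _ * x"] cong: if_cong)
  then have "(\<Sum>i\<in>{i\<in>S. i ! k = w}. e i) = 0" if "k < n" for k w
    using index_set_relation_balanced[OF part len S(1,2) wb(1) total] that by blast
  then show ?thesis
    using that e(1) total by blast
qed

lemma prod_regroup_by_entries:
  fixes g :: "nat \<Rightarrow> nat \<Rightarrow> 'a::comm_semiring_1"
  assumes T: "finite T" and W: "finite W" and TW: "\<And>i k. i \<in> T \<Longrightarrow> k < n \<Longrightarrow> i ! k \<in> W"
  shows "(\<Prod>i\<in>T. (\<Prod>k<n. g k (i ! k)) ^ a i)
    = (\<Prod>k<n. \<Prod>w\<in>W. g k w ^ (\<Sum>i\<in>{i\<in>T. i ! k = w}. a i))"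
proof -
  have "(\<Prod>i\<in>T. (\<Prod>k<n. g k (i ! k)) ^ a i) = (\<Prod>i\<in>T. \<Prod>k<n. g k (i ! k) ^ a i)"
    by (simp add: prod_power_distrib)
  also have "\<dots> = (\<Prod>k<n. \<Prod>i\<in>T. g k (i ! k) ^ a i)"
    by (rule prod.swap)
  also have "\<dots> = (\<Prod>k<n. \<Prod>w\<in>W. \<Prod>i\<in>{i\<in>T. i ! k = w}. g k w ^ a i)"
  proof (rule prod.cong[OF refl])
    fix k assume "k \<in> {..<n}"
    then have "(\<Prod>i\<in>T. g k (i ! k) ^ a i) = (\<Prod>w\<in>W. \<Prod>i\<in>{i\<in>T. i ! k = w}. g k (i ! k) ^ a i)"
      using T W TW by (intro prod.group[symmetric]) auto
    also have "\<dots> = (\<Prod>w\<in>W. \<Prod>i\<in>{i\<in>T. i ! k = w}. g k w ^ a i)"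
      by (intro prod.cong refl) auto
    finally show "(\<Prod>i\<in>T. g k (i ! k) ^ a i) = (\<Prod>w\<in>W. \<Prod>i\<in>{i\<in>T. i ! k = w}. g k w ^ a i)" .
  qed
  finally show ?thesis
    by (simp add: power_sum)
qed

lemma sum_int_pos_neg:
  fixes e :: "'a \<Rightarrow> int"
  assumes "finite T"
  shows "(\<Sum>i\<in>T. e i) = int (\<Sum>i\<in>{i\<in>T. 0 < e i}. nat (e i)) - int (\<Sum>i\<in>{i\<in>T. e i < 0}. nat (- e i))"
proof -
  have "(\<Sum>i\<in>T. e i) = (\<Sum>i\<in>{i\<in>T. 0 < e i} \<union> {i\<in>T. e i < 0}. e i)"
    by (rule sum.mono_neutral_right) (use assms in auto)
  also have "\<dots> = (\<Sum>i\<in>{i\<in>T. 0 < e i}. e i) + (\<Sum>i\<in>{i\<in>T. e i < 0}. e i)"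
    by (rule sum.union_disjoint) (use assms in auto)
  finally show ?thesis
    by (simp add: of_nat_sum sum_negf[symmetric])
qed

text \<open>Both sides are the same monomial in the parameters \<open>\<mu>\<^sub>k\<^sub>w\<close>.\<close>

lemma moment_point_binomial:
  assumes part: "is_partition lam" and len: "length lam \<le> n"
    and S: "finite S" "S \<subseteq> index_set n lam"
    and e: "\<And>k w. k < n \<Longrightarrow> (\<Sum>i\<in>{i\<in>S. i ! k = w}. e i) = (0 :: int)"
  shows "(\<Prod>i\<in>{i\<in>S. 0 < e i}. moment_point n lam mu i ^ nat (e i))
    = (\<Prod>i\<in>{i\<in>S. e i < 0}. moment_point n lam mu i ^ nat (- e i))"
proof -
  define g where "g k w = (if w = 0 then 1 else mu k w)" for k w
  have y: "moment_point n lam mu i = (\<Prod>k<n. g k (i ! k))" if "i \<in> S" for i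
    using that S(2) unfolding g_def by (auto simp: moment_point_in_index_set)
  have W: "i ! k \<in> set (pad n lam)" if "i \<in> S" "k < n" for i k
    using that S(2) nth_index_set_in_pad[OF part len] by blast
  have exps: "(\<Sum>i\<in>{i\<in>{i\<in>S. 0 < e i}. i ! k = w}. nat (e i))
      = (\<Sum>i\<in>{i\<in>{i\<in>S. e i < 0}. i ! k = w}. nat (- e i))" if "k < n" for k w
  proof -
    have sets: "{i\<in>{i\<in>S. i ! k = w}. 0 < e i} = {i\<in>{i\<in>S. 0 < e i}. i ! k = w}"
      "{i\<in>{i\<in>S. i ! k = w}. e i < 0} = {i\<in>{i\<in>S. e i < 0}. i ! k = w}"
      by auto
    have "(\<Sum>i\<in>{i\<in>S. i ! k = w}. e i) = int (\<Sum>i\<in>{i\<in>{i\<in>S. 0 < e i}. i ! k = w}. nat (e i))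
        - int (\<Sum>i\<in>{i\<in>{i\<in>S. e i < 0}. i ! k = w}. nat (- e i))"
      unfolding sets[symmetric] by (rule sum_int_pos_neg) (use S(1) in simp)
    then show ?thesis
      using e[OF that, of w] by linarith
  qed
  have "(\<Prod>i\<in>{i\<in>S. 0 < e i}. moment_point n lam mu i ^ nat (e i))
      = (\<Prod>i\<in>{i\<in>S. 0 < e i}. (\<Prod>k<n. g k (i ! k)) ^ nat (e i))"
    using y by simp
  also have "\<dots> = (\<Prod>k<n. \<Prod>w\<in>set (pad n lam). g k w ^ (\<Sum>i\<in>{i\<in>{i\<in>S. 0 < e i}. i ! k = w}. nat (e i)))"
    by (rule prod_regroup_by_entries) (use S(1) W in auto)
  also have "\<dots> = (\<Prod>k<n. \<Prod>w\<in>set (pad n lam). g k w ^ (\<Sum>i\<in>{i\<in>{i\<in>S. e i < 0}. i ! k = w}. nat (- e i)))"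
    using exps by simp
  also have "\<dots> = (\<Prod>i\<in>{i\<in>S. e i < 0}. (\<Prod>k<n. g k (i ! k)) ^ nat (- e i))"
    by (rule prod_regroup_by_entries[symmetric]) (use S(1) W in auto)
  also have "\<dots> = (\<Prod>i\<in>{i\<in>S. e i < 0}. moment_point n lam mu i ^ nat (- e i))"
    using y by simp
  finally show ?thesis .
qed

definition monomial_on :: "'v set \<Rightarrow> ('v \<Rightarrow> nat) \<Rightarrow> ('v \<Rightarrow>\<^sub>0 nat)" where
  "monomial_on T a = Abs_poly_mapping (\<lambda>v. if v \<in> T then a v else 0)"

lemma lookup_monomial_on:
  "finite T \<Longrightarrow> Poly_Mapping.lookup (monomial_on T a) = (\<lambda>v. if v \<in> T then a v else 0)"
  unfolding monomial_on_def by (subst lookup_Abs_poly_mapping) (auto elim: finite_subset[rotated])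

lemma keys_monomial_on: "finite T \<Longrightarrow> \<forall>v\<in>T. 0 < a v \<Longrightarrow> Poly_Mapping.keys (monomial_on T a) = T"
  by (auto simp: in_keys_iff lookup_monomial_on split: if_splits)

lemma monomial_eval_monomial_on:
  "finite T \<Longrightarrow> \<forall>v\<in>T. 0 < a v \<Longrightarrow> monomial_eval (monomial_on T a) x = (\<Prod>v\<in>T. x v ^ a v)"
  unfolding monomial_eval_def by (simp add: keys_monomial_on lookup_monomial_on)

lemma mono_deg_monomial_on:
  "finite T \<Longrightarrow> \<forall>v\<in>T. 0 < a v \<Longrightarrow> mono_deg (monomial_on T a) = (\<Sum>v\<in>T. a v)"
  unfolding mono_deg_def by (simp add: keys_monomial_on lookup_monomial_on)

lemma proj_closed_binomial_zero_set:
  assumes "finite T" "finite U" "\<forall>v\<in>T. 0 < a v" "\<forall>v\<in>U. 0 < b v" "(\<Sum>v\<in>T. a v) = (\<Sum>v\<in>U. b v)"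
  shows "proj_closed N {x \<in> proj_points N. (\<Prod>v\<in>T. x v ^ a v) = (\<Prod>v\<in>U. x v ^ b v)}"
proof -
  define L where "L = [(1::complex, monomial_on T a), (-1, monomial_on U b)]"
  have "proj_closed N {x \<in> proj_points N. poly_list_eval L x = 0}"
    unfolding L_def using assms
    by (intro proj_closed_zero_set_list[OF proj_closed_proj_points]) (simp add: mono_deg_monomial_on)
  moreover have "poly_list_eval L x = (\<Prod>v\<in>T. x v ^ a v) - (\<Prod>v\<in>U. x v ^ b v)" for x
    unfolding L_def using assms by (simp add: monomial_eval_monomial_on)
  ultimately show ?thesis
    by simp
qed

lemma moment_variety_binomial:
  assumes part: "is_partition lam" and len: "length lam \<le> n"
    and S: "finite S" "S \<subseteq> index_set n lam"
    and total: "(\<Sum>i\<in>S. e i) = 0"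
    and balanced: "\<And>k w. k < n \<Longrightarrow> (\<Sum>i\<in>{i\<in>S. i ! k = w}. e i) = (0 :: int)"
    and x: "x \<in> moment_variety n lam"
  shows "(\<Prod>i\<in>{i\<in>S. 0 < e i}. x i ^ nat (e i)) = (\<Prod>i\<in>{i\<in>S. e i < 0}. x i ^ nat (- e i))"
proof -
  let ?V = "{x \<in> proj_points (index_set n lam).
    (\<Prod>i\<in>{i\<in>S. 0 < e i}. x i ^ nat (e i)) = (\<Prod>i\<in>{i\<in>S. e i < 0}. x i ^ nat (- e i))}"
  have "(\<Sum>i\<in>{i\<in>S. 0 < e i}. nat (e i)) = (\<Sum>i\<in>{i\<in>S. e i < 0}. nat (- e i))"
    using sum_int_pos_neg[OF S(1), of e] total by linarith
  then have "proj_closed (index_set n lam) ?V"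
    using S(1) by (intro proj_closed_binomial_zero_set) auto
  moreover have "moment_image n lam UNIV \<subseteq> ?V"
    unfolding moment_image_def using moment_point_binomial[OF part len S balanced] by auto
  ultimately have "moment_variety n lam \<subseteq> ?V"
    unfolding moment_variety_eq_closure_image by (rule zariski_closure_minimal)
  then show ?thesis
    using x by blast
qed

lemma moment_variety_not_alg_indep:
  assumes part: "is_partition lam" and len: "length lam \<le> n"
    and card: "s + 1 = card (set (pad n lam))"
    and S: "finite S" "card S = Suc (Suc ((n - 1) * s))"
  shows "\<not> alg_indep_on (moment_variety n lam) S"
proof
  let ?N = "index_set n lam" and ?X = "moment_variety n lam"
  assume indep: "alg_indep_on ?X S"
  have "?X \<subseteq> proj_points ?N"
    unfolding moment_variety_def by (rule zariski_closure_minimal[OF proj_closed_proj_points]) blast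
  then have "S \<subseteq> ?N"
    using indep by (rule alg_indep_on_subset_support)
  obtain e :: "nat list \<Rightarrow> int" where e: "\<exists>i\<in>S. e i \<noteq> 0" "(\<Sum>i\<in>S. e i) = 0"
    "\<And>k w. k < n \<Longrightarrow> (\<Sum>i\<in>{i\<in>S. i ! k = w}. e i) = 0"
    using index_set_integer_relation[OF part len card S(1) \<open>S \<subseteq> ?N\<close> S(2)] by blast
  define F where "F x = (\<Prod>i\<in>{i\<in>S. 0 < e i}. x i ^ nat (e i)) - (\<Prod>i\<in>{i\<in>S. e i < 0}. x i ^ nat (- e i))"
    for x :: "nat list \<Rightarrow> complex"
  have "F \<in> poly_funs S"
    unfolding F_def using S(1) by (intro poly_funs_diff poly_funs_prod poly_funs_power poly_funs_var) auto
  moreover have "\<forall>x\<in>?X. F x = 0"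
    unfolding F_def using moment_variety_binomial[OF part len S(1) \<open>S \<subseteq> ?N\<close> e(2,3)] by simp
  ultimately have F_0: "F x = 0" for x
    by (rule alg_indep_onD[OF indep])
  have "{i\<in>S. e i < 0} \<noteq> {}"
  proof
    assume "{i\<in>S. e i < 0} = {}"
    then have "(\<Sum>i\<in>S. e i) = (\<Sum>i\<in>{i\<in>S. 0 < e i}. e i)"
      using S(1) by (intro sum.mono_neutral_right) (auto simp: not_less order.order_iff_strict)
    moreover have "(\<Sum>i\<in>{i\<in>S. 0 < e i}. e i) > 0"
      using e(1) S(1) \<open>{i\<in>S. e i < 0} = {}\<close> by (intro sum_pos) (auto simp: neq_iff)
    ultimately show False
      using e(2) by simp
  qed
  then have "F (\<lambda>i. if 0 < e i then 1 else 0) = 1"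
    unfolding F_def using S(1) by (auto simp: prod_zero_iff)
  then show False
    using F_0 by simp
qed

theorem theorem4p4:
  fixes n :: nat and lam :: "nat list" and s :: nat
  assumes "is_partition lam"
    and "length lam \<le> n"
    and "s + 1 = card (set (lam @ replicate (n - length lam) 0))"
  shows "proj_dim_eq (index_set n lam) (moment_variety n lam) ((n - 1) * s)"
proof -
  have card: "s + 1 = card (set (pad n lam))"
    using assms(3) unfolding pad_def .
  have "\<not> has_irred_chain (index_set n lam) (moment_variety n lam) (Suc ((n - 1) * s))"
  proof
    assume "has_irred_chain (index_set n lam) (moment_variety n lam) (Suc ((n - 1) * s))"
    then obtain S where "finite S" "card S = Suc (Suc ((n - 1) * s))" "alg_indep_on (moment_variety n lam) S"
      by (rule has_irred_chain_alg_indep)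
    then show False
      using moment_variety_not_alg_indep[OF assms(1,2) card] by blast
  qed
  then show ?thesis
    unfolding proj_dim_eq_def using moment_variety_irred_chain[OF assms(1,2) card] by blast
qed

end
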